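(* Let $0<p\le 1$ and let $\mathcal{X}=(\mathbf{x}_n)_{n=1}^\infty$ be a spreading basis of a locally $p$-convex quasi-Banach space $\mathbb{X}$. Then there is an equivalent $p$-norm for $\mathbb{X}$ relative to which $\mathcal{X}$ is isometrically spreading.
   Context: Scalars are real or complex. A quasi-Banach space is locally $p$-convex if the origin has a $p$-convex neighbourhood; equivalently it admits an equivalent $p$-norm, i.e. a quasi-norm $\|\cdot\|$ with $\|f+g\|^p\le\|f\|^p+\|g\|^p$. A complete minimal system is a sequence $\mathcal{X}=(\mathbf{x}_n)$ with dense linear span for which there exist $\mathbf{x}_n^*\in\mathbb{X}^*$ with $\mathbf{x}_n^*(\mathbf{x}_k)=\delta_{n,k}$ (coordinate functionals). For $\mathcal{N}\subseteq\mathbb{N}$ and an injective map $\psi\colon\mathcal{N}\to\mathbb{N}$, $\psi$ is a shift relative to $\mathcal{X}$ if the linear map $f\mapsto\sum_{n\in\mathcal{N}}\mathbf{x}_n^*(f)\,\mathbf{x}_{\psi(n)}$, $f\in\operatorname{span}(\mathcal{X})$, extends to a bounded operator $L_\psi\colon\mathbb{X}\to\mathbb{X}$. A spreading basis is a complete minimal system such that every increasing map $\psi\colon\mathbb{N}\to\mathbb{N}$ is a shift and $L_\psi$ is an isomorphism (onto its range). For a sequence $(\mathbf{x}_n)$, $\mathcal{N}\subseteq\mathbb{N}$ and an injective $\psi\colon\mathcal{N}\to\mathbb{N}$, $\psi$ is a translation if the assignment $\mathbf{x}_n\mapsto\mathbf{x}_{\psi(n)}$, $n\in\mathcal{N}$,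 defines a linear map on $\operatorname{span}(\mathbf{x}_n\colon n\in\mathcal{N})$ extending to an isomorphism $T_\psi$ from the closed linear span of $\{\mathbf{x}_n\colon n\in\mathcal{N}\}$ onto the closed linear span of $\{\mathbf{x}_n\colon n\in\psi(\mathcal{N})\}$. A sequence is isometrically spreading if every increasing map $\psi\colon\mathcal{N}\to\mathbb{N}$ with $\mathcal{N}\subseteq\mathbb{N}$ infinite is a translation with $\|T_\psi\|\le 1$. *)

theory Defs
  imports "HOL-Analysis.Analysis"
begin

text \<open>Quasi-Banach spaces over a scalar field 'k (real or complex; we allow any
real normed field, which by Mazur's theorem are exactly R and C).\<close>

definition quasi_norm :: "('k::real_normed_field \<Rightarrow> 'a::ab_group_add \<Rightarrow> 'a) \<Rightarrow> real \<Rightarrow> ('a \<Rightarrow> real) \<Rightarrow> bool" where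
  "quasi_norm sc K N \<longleftrightarrow> K \<ge> 1 \<and>
     (\<forall>x. N x \<ge> 0) \<and> (\<forall>x. N x = 0 \<longleftrightarrow> x = 0) \<and>
     (\<forall>c x. N (sc c x) = norm c * N x) \<and>
     (\<forall>x y. N (x + y) \<le> K * (N x + N y))"

definition qcomplete :: "('a::ab_group_add \<Rightarrow> real) \<Rightarrow> bool" where
  "qcomplete N \<longleftrightarrow> (\<forall>s::nat \<Rightarrow> 'a.
     (\<forall>e>0. \<exists>M. \<forall>m\<ge>M. \<forall>n\<ge>M. N (s m - s n) < e) \<longrightarrow>
     (\<exists>y. (\<lambda>n. N (s n - y)) \<longlonglongrightarrow> 0))"

definition quasi_banach :: "('k::real_normed_field \<Rightarrow> 'a::ab_group_add \<Rightarrow> 'a) \<Rightarrow> ('a \<Rightarrow> real) \<Rightarrow> bool" where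
  "quasi_banach sc N \<longleftrightarrow> vector_space sc \<and> (\<exists>K. quasi_norm sc K N) \<and> qcomplete N"

definition p_norm :: "('k::real_normed_field \<Rightarrow> 'a::ab_group_add \<Rightarrow> 'a) \<Rightarrow> real \<Rightarrow> ('a \<Rightarrow> real) \<Rightarrow> bool" where
  "p_norm sc p N \<longleftrightarrow>
     (\<forall>x. N x \<ge> 0) \<and> (\<forall>x. N x = 0 \<longleftrightarrow> x = 0) \<and>
     (\<forall>c x. N (sc c x) = norm c * N x) \<and>
     (\<forall>x y. N (x + y) powr p \<le> N x powr p + N y powr p)"

definition equiv_qnorm :: "('a \<Rightarrow> real) \<Rightarrow> ('a \<Rightarrow> real) \<Rightarrow> bool" where
  "equiv_qnorm N N' \<longleftrightarrow> (\<exists>c C. 0 < c \<and> 0 < C \<and> (\<forall>x. c * N x \<le> N' x \<and> N' x \<le> C * N x))"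

definition locally_p_convex :: "('k::real_normed_field \<Rightarrow> 'a::ab_group_add \<Rightarrow> 'a) \<Rightarrow> real \<Rightarrow> ('a \<Rightarrow> real) \<Rightarrow> bool" where
  "locally_p_convex sc p N \<longleftrightarrow> (\<exists>N'. p_norm sc p N' \<and> equiv_qnorm N N')"

definition qclosure :: "('a::ab_group_add \<Rightarrow> real) \<Rightarrow> 'a set \<Rightarrow> 'a set" where
  "qclosure N S = {x. \<forall>e>0. \<exists>y\<in>S. N (x - y) < e}"

definition dual_elem :: "('k::real_normed_field \<Rightarrow> 'a::ab_group_add \<Rightarrow> 'a) \<Rightarrow> ('a \<Rightarrow> real) \<Rightarrow> ('a \<Rightarrow> 'k) \<Rightarrow> bool" where
  "dual_elem sc N f \<longleftrightarrow>
     (\<forall>x y. f (x + y) = f x + f y) \<and> (\<forall>c x. f (sc c x) = c * f x) \<and>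
     (\<exists>C. \<forall>x. norm (f x) \<le> C * N x)"

definition bounded_op :: "('k::real_normed_field \<Rightarrow> 'a::ab_group_add \<Rightarrow> 'a) \<Rightarrow> ('a \<Rightarrow> real) \<Rightarrow> ('a \<Rightarrow> 'a) \<Rightarrow> bool" where
  "bounded_op sc N L \<longleftrightarrow>
     (\<forall>x y. L (x + y) = L x + L y) \<and> (\<forall>c x. L (sc c x) = sc c (L x)) \<and>
     (\<exists>C. \<forall>x. N (L x) \<le> C * N x)"

definition coord_functionals :: "('k::real_normed_field \<Rightarrow> 'a::ab_group_add \<Rightarrow> 'a) \<Rightarrow> ('a \<Rightarrow> real) \<Rightarrow> (nat \<Rightarrow> 'a) \<Rightarrow> (nat \<Rightarrow> 'a \<Rightarrow> 'k) \<Rightarrow> bool" where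
  "coord_functionals sc N x xs \<longleftrightarrow>
     (\<forall>n. dual_elem sc N (xs n)) \<and> (\<forall>n k. xs n (x k) = (if n = k then 1 else 0))"

definition complete_minimal_system :: "('k::real_normed_field \<Rightarrow> 'a::ab_group_add \<Rightarrow> 'a) \<Rightarrow> ('a \<Rightarrow> real) \<Rightarrow> (nat \<Rightarrow> 'a) \<Rightarrow> bool" where
  "complete_minimal_system sc N x \<longleftrightarrow>
     qclosure N (module.span sc (range x)) = UNIV \<and> (\<exists>xs. coord_functionals sc N x xs)"

definition is_shift_op :: "('k::real_normed_field \<Rightarrow> 'a::ab_group_add \<Rightarrow> 'a) \<Rightarrow> ('a \<Rightarrow> real) \<Rightarrow> (nat \<Rightarrow> 'a) \<Rightarrow> (nat \<Rightarrow> 'a \<Rightarrow> 'k) \<Rightarrow> nat set \<Rightarrow> (nat \<Rightarrow> nat) \<Rightarrow> ('a \<Rightarrow> 'a) \<Rightarrow> bool" where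
  "is_shift_op sc N x xs Ns psi L \<longleftrightarrow> inj_on psi Ns \<and> bounded_op sc N L \<and>
     (\<forall>f\<in>module.span sc (range x).
        L f = (\<Sum>n\<in>{n\<in>Ns. xs n f \<noteq> 0}. sc (xs n f) (x (psi n))))"

definition spreading_basis :: "('k::real_normed_field \<Rightarrow> 'a::ab_group_add \<Rightarrow> 'a) \<Rightarrow> ('a \<Rightarrow> real) \<Rightarrow> (nat \<Rightarrow> 'a) \<Rightarrow> bool" where
  "spreading_basis sc N x \<longleftrightarrow>
     qclosure N (module.span sc (range x)) = UNIV \<and>
     (\<exists>xs. coord_functionals sc N x xs \<and>
        (\<forall>psi::nat \<Rightarrow> nat. strict_mono psi \<longrightarrow>
           (\<exists>L. is_shift_op sc N x xs UNIV psi L \<and>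
                (\<exists>c>0. \<forall>f. c * N f \<le> N (L f)))))"

definition sub_isomorphism :: "('k::real_normed_field \<Rightarrow> 'a::ab_group_add \<Rightarrow> 'a) \<Rightarrow> ('a \<Rightarrow> real) \<Rightarrow> 'a set \<Rightarrow> 'a set \<Rightarrow> ('a \<Rightarrow> 'a) \<Rightarrow> bool" where
  "sub_isomorphism sc N A B T \<longleftrightarrow>
     (\<forall>u\<in>A. \<forall>v\<in>A. T (u + v) = T u + T v) \<and> (\<forall>c. \<forall>u\<in>A. T (sc c u) = sc c (T u)) \<and>
     bij_betw T A B \<and>
     (\<exists>C. \<forall>u\<in>A. N (T u) \<le> C * N u) \<and> (\<exists>c>0. \<forall>u\<in>A. c * N u \<le> N (T u))"

definition cspan :: "('k::real_normed_field \<Rightarrow> 'a::ab_group_add \<Rightarrow> 'a) \<Rightarrow> ('a \<Rightarrow> real) \<Rightarrow> (nat \<Rightarrow> 'a) \<Rightarrow> nat set \<Rightarrow> 'a set" where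
  "cspan sc N x S = qclosure N (module.span sc (x ` S))"

definition translation_op :: "('k::real_normed_field \<Rightarrow> 'a::ab_group_add \<Rightarrow> 'a) \<Rightarrow> ('a \<Rightarrow> real) \<Rightarrow> (nat \<Rightarrow> 'a) \<Rightarrow> nat set \<Rightarrow> (nat \<Rightarrow> nat) \<Rightarrow> ('a \<Rightarrow> 'a) \<Rightarrow> bool" where
  "translation_op sc N x Ns psi T \<longleftrightarrow> inj_on psi Ns \<and>
     (\<forall>n\<in>Ns. T (x n) = x (psi n)) \<and>
     sub_isomorphism sc N (cspan sc N x Ns) (cspan sc N x (psi ` Ns)) T"

definition isometrically_spreading :: "('k::real_normed_field \<Rightarrow> 'a::ab_group_add \<Rightarrow> 'a) \<Rightarrow> ('a \<Rightarrow> real) \<Rightarrow> (nat \<Rightarrow> 'a) \<Rightarrow> bool" where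
  "isometrically_spreading sc N x \<longleftrightarrow>
     (\<forall>Ns psi. infinite Ns \<and> strict_mono_on Ns psi \<longrightarrow>
        (\<exists>T. translation_op sc N x Ns psi T \<and>
             (\<forall>f\<in>cspan sc N x Ns. N (T f) \<le> N f)))"

end

theory Submission
  imports Defs
begin

(* The spreading property bounds the shift operator of each increasing map; a diagonal
   argument makes the bound uniform over all increasing maps, hence over all maps that are
   increasing on the finite support of a vector. On the span of the basis we then take the
   limit, as t tends to infinity, of the largest p-norm of a copy of f whose support has gaps
   larger than t. Copies of f and h this sparse can be interleaved, so the limit is again a
   p-norm; it is equivalent to the old one and invariant under increasing relocations of
   supports. Inf-convolution extends it to an equivalent p-norm on the whole space, and the
   relocations, now isometric on the span, extend to isometries of the closed spans. *)

lemma strict_mono_on_inv_into: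
  fixes \<psi> :: "'a::linorder \<Rightarrow> 'b::linorder"
  assumes "strict_mono_on A \<psi>"
  shows "strict_mono_on (\<psi> ` A) (inv_into A \<psi>)"
proof (rule strict_mono_onI)
  fix a b assume "a \<in> \<psi> ` A" "b \<in> \<psi> ` A" "a < b"
  then obtain n m where "n \<in> A" "m \<in> A" "a = \<psi> n" "b = \<psi> m" by blast
  with \<open>a < b\<close> show "inv_into A \<psi> a < inv_into A \<psi> b"
    using strict_mono_on_imp_inj_on[OF assms] by (simp add: strict_mono_on_less[OF assms])
qed

lemma strict_mono_splice:
  fixes \<psi> \<phi> :: "nat \<Rightarrow> nat"
  assumes \<psi>: "strict_mono \<psi>" and \<phi>: "strict_mono \<phi>"
  shows "strict_mono (\<lambda>n. if n < k then \<psi> n else \<psi> k + \<phi> (n - k))"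
proof (rule strict_mono_Suc_iff[THEN iffD2], intro allI)
  fix n
  consider "Suc n < k" | "Suc n = k" | "k \<le> n" by linarith
  then show "(if n < k then \<psi> n else \<psi> k + \<phi> (n - k)) < (if Suc n < k then \<psi> (Suc n) else \<psi> k + \<phi> (Suc n - k))"
  proof cases
    case 2
    then have "\<psi> n < \<psi> k" using \<psi> by (simp add: strict_mono_less)
    with 2 show ?thesis by simp
  next
    case 3
    then have "\<phi> (n - k) < \<phi> (Suc n - k)" using \<phi> by (simp add: strict_mono_less)
    with 3 show ?thesis by simp
  qed (use \<psi> in \<open>simp add: strict_mono_less\<close>)
qed

lemma strict_mono_diagonal_limit:
  fixes k :: "nat \<Rightarrow> nat" and \<phi> :: "nat \<Rightarrow> nat \<Rightarrow> nat"
  assumes sm: "\<And>j. strict_mono (\<phi> j)" and k: "\<And>j. k j < k (Suc j)"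
    and agree: "\<And>j i. i < k j \<Longrightarrow> \<phi> (Suc j) i = \<phi> j i"
  obtains \<psi> where "strict_mono \<psi>" and "\<And>j i. i < k j \<Longrightarrow> \<psi> i = \<phi> j i"
proof -
  have "strict_mono k" using k by (simp add: strict_mono_Suc_iff)
  then have k_ge: "j < k (Suc j)" for j
    using strict_mono_imp_increasing[of k "Suc j"] by simp
  have stable: "\<phi> j' i = \<phi> j i" if "j \<le> j'" "i < k j" for i j j'
    using that(1)
  proof (induction j' rule: dec_induct)
    case (step m)
    have "i < k m" using that(2) \<open>strict_mono k\<close> step(1) by (meson less_le_trans strict_mono_less_eq)
    then show ?case using agree step.IH by simp
  qed simp
  define \<psi> where "\<psi> i = \<phi> (Suc i) i" for i
  have \<psi>_eq: "\<psi> i = \<phi> j i" if "i < k j" for i j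
    using stable[of "Suc i" "max j (Suc i)" i] stable[of j "max j (Suc i)" i] that k_ge[of i]
    by (simp add: \<psi>_def)
  have "strict_mono \<psi>"
  proof (rule strict_monoI)
    fix i i' :: nat assume "i < i'"
    then have "i < k (Suc i')" "i' < k (Suc i')" using k_ge[of i'] by simp_all
    with \<open>i < i'\<close> show "\<psi> i < \<psi> i'"
      using sm \<psi>_eq[of i "Suc i'"] \<psi>_eq[of i' "Suc i'"] by (simp add: strict_mono_less)
  qed
  with \<psi>_eq show thesis using that by blast
qed

lemma strict_mono_on_factor:
  fixes \<rho> :: "nat \<Rightarrow> nat"
  assumes fin: "finite F" and \<rho>: "strict_mono_on F \<rho>"
  obtains \<psi> \<phi> :: "nat \<Rightarrow> nat" where "strict_mono \<psi>" "strict_mono \<phi>" "\<forall>n\<in>F. \<phi> (\<rho> n) = \<psi> n"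
proof -
  define r where "r m = Max (insert 0 (\<rho> ` {n\<in>F. n \<le> m}))" for m
  define e where "e j = Max (insert 0 {n\<in>F. \<rho> n \<le> j})" for j
  have "r m \<le> r m'" "e m \<le> e m'" if "m \<le> m'" for m m'
    unfolding r_def e_def using fin that by (auto intro!: Max_mono)
  then have "strict_mono (\<lambda>m. m + r m)" "strict_mono (\<lambda>j. j + e j)"
    by (auto intro!: strict_monoI add_less_le_mono)
  moreover have "r n = \<rho> n" if "n \<in> F" for n
    unfolding r_def using fin that by (intro Max_eqI) (auto intro: strict_mono_on_leD[OF \<rho>])
  moreover have "e (\<rho> n) = n" if "n \<in> F" for n
    unfolding e_def using fin that by (intro Max_eqI) (auto simp: strict_mono_on_less_eq[OF \<rho>])
  ultimately show thesis using that[of "\<lambda>m. m + r m" "\<lambda>j. j + e j"] by (simp add: add.commute)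
qed

text \<open>The witness is \<sigma> u = T * |U \<inter> [0, u]| + max {\<rho> w - T * |U \<inter> [0, w]| | w \<in> W, w \<le> u}; the
  gaps of \<rho> on W make the maximum attained at w = u when u \<in> W.\<close>

lemma spread_extension:
  fixes \<rho> :: "nat \<Rightarrow> nat"
  assumes fin: "finite U" and WU: "W \<subseteq> U"
    and start: "\<And>w. w \<in> W \<Longrightarrow> T * card U \<le> \<rho> w"
    and gap: "\<And>w w'. w \<in> W \<Longrightarrow> w' \<in> W \<Longrightarrow> w < w' \<Longrightarrow> \<rho> w + T * card U \<le> \<rho> w'"
  obtains \<sigma> :: "nat \<Rightarrow> nat" where "\<forall>w\<in>W. \<sigma> w = \<rho> w" and "\<forall>u\<in>U. T \<le> \<sigma> u"
    and "\<forall>u\<in>U. \<forall>u'\<in>U. u < u' \<longrightarrow> \<sigma> u + T \<le> \<sigma> u'"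
proof -
  define c where "c u = card {v\<in>U. v \<le> u}" for u
  define g where "g w = \<rho> w - T * c w" for w
  define m where "m u = Max (insert 0 (g ` {w\<in>W. w \<le> u}))" for u
  define \<sigma> where "\<sigma> u = T * c u + m u" for u
  have finW: "finite W" using fin WU finite_subset by blast
  have c_le: "T * c u \<le> T * card U" for u
    unfolding c_def using fin by (intro mult_le_mono2 card_mono) auto
  have c_less: "T * c u + T \<le> T * c u'" if "u \<in> U" "u' \<in> U" "u < u'" for u u'
  proof -
    have "{v\<in>U. v \<le> u} \<subseteq> {v\<in>U. v \<le> u'}" "u' \<notin> {v\<in>U. v \<le> u}" using that by auto
    with \<open>u' \<in> U\<close> have "{v\<in>U. v \<le> u} \<subset> {v\<in>U. v \<le> u'}" by blast
    then have "c u < c u'" unfolding c_def using fin by (intro psubset_card_mono) auto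
    then show ?thesis by (metis mult_Suc_right add.commute mult_le_mono2 Suc_leI)
  qed
  have m_mono: "m u \<le> m u'" if "u \<le> u'" for u u'
    unfolding m_def using finW that by (intro Max_mono) auto
  have g_mono: "g w' \<le> g w" if "w' \<in> W" "w \<in> W" "w' \<le> w" for w w'
  proof (cases "w' = w")
    case False
    have "\<rho> w' - T * c w' \<le> \<rho> w'" by simp
    also have "\<dots> \<le> \<rho> w - T * c w" using gap[of w' w] that False c_le[of w] by linarith
    finally show ?thesis by (simp add: g_def)
  qed simp
  have "\<sigma> w = \<rho> w" if "w \<in> W" for w
  proof -
    have "m w = g w" unfolding m_def using finW that g_mono by (intro Max_eqI) auto
    moreover have "T * c w \<le> \<rho> w" using c_le[of w] start[OF that] by (rule le_trans)
    ultimately show ?thesis by (simp add: \<sigma>_def g_def)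
  qed
  moreover have "T \<le> \<sigma> u" if "u \<in> U" for u
  proof -
    have "0 < c u" unfolding c_def using fin that by (subst card_gt_0_iff) auto
    then show ?thesis by (simp add: \<sigma>_def trans_le_add1)
  qed
  moreover have "\<sigma> u + T \<le> \<sigma> u'" if "u \<in> U" "u' \<in> U" "u < u'" for u u'
    using c_less[OF that] m_mono[of u u'] that by (simp add: \<sigma>_def)
  ultimately show thesis using that by blast
qed

lemma equiv_qnorm_trans:
  assumes "equiv_qnorm N N'" and "equiv_qnorm N' N''"
  shows "equiv_qnorm N N''"
proof -
  obtain c C where c: "0 < c" "0 < C" "\<And>z. c * N z \<le> N' z \<and> N' z \<le> C * N z"
    using assms(1) unfolding equiv_qnorm_def by blast
  obtain d D where d: "0 < d" "0 < D" "\<And>z. d * N' z \<le> N'' z \<and> N'' z \<le> D * N' z"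
    using assms(2) unfolding equiv_qnorm_def by blast
  have "d * c * N z \<le> N'' z \<and> N'' z \<le> D * C * N z" for z
  proof
    have "d * (c * N z) \<le> d * N' z" using c(3)[of z] d(1) by (intro mult_left_mono) auto
    then show "d * c * N z \<le> N'' z" using d(3)[of z] by (simp add: mult.assoc)
    have "D * N' z \<le> D * (C * N z)" using c(3)[of z] d(2) by (intro mult_left_mono) auto
    then show "N'' z \<le> D * C * N z" using d(3)[of z] by (simp add: mult.assoc)
  qed
  with c d show ?thesis unfolding equiv_qnorm_def by (metis mult_pos_pos)
qed

lemma qcomplete_equiv_qnorm:
  assumes complete: "qcomplete N" and equiv: "equiv_qnorm N N'"
  shows "qcomplete N'"
  unfolding qcomplete_def
proof (intro allI impI)
  fix s :: "nat \<Rightarrow> 'a"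
  assume cauchy': "\<forall>e>0. \<exists>M. \<forall>m\<ge>M. \<forall>n\<ge>M. N' (s m - s n) < e"
  obtain c C where c: "0 < c" "0 < C" "\<And>z. c * N z \<le> N' z \<and> N' z \<le> C * N z"
    using equiv unfolding equiv_qnorm_def by blast
  have "\<exists>M. \<forall>m\<ge>M. \<forall>n\<ge>M. N (s m - s n) < e" if "0 < e" for e
  proof -
    have "0 < c * e" using c(1) \<open>0 < e\<close> by simp
    then obtain M where "\<forall>m\<ge>M. \<forall>n\<ge>M. N' (s m - s n) < c * e" using cauchy' by blast
    then show ?thesis using c by (metis le_less_trans mult_less_cancel_left_pos)
  qed
  then obtain y where y: "(\<lambda>n. N (s n - y)) \<longlonglongrightarrow> 0" using complete unfolding qcomplete_def by blast
  have "(\<lambda>n. N' (s n - y)) \<longlonglongrightarrow> 0"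
  proof (rule tendsto_sandwich)
    show "(\<lambda>n. c * N (s n - y)) \<longlonglongrightarrow> 0" "(\<lambda>n. C * N (s n - y)) \<longlonglongrightarrow> 0"
      using tendsto_mult_right_zero[OF y] by auto
  qed (use c(3) in auto)
  then show "\<exists>y. (\<lambda>n. N' (s n - y)) \<longlonglongrightarrow> 0" ..
qed

lemma equiv_qnorm_transfer_bounds:
  assumes equiv: "equiv_qnorm N N'" and nonneg: "\<And>z. 0 \<le> N' z"
    and upper: "\<And>f. N (L f) \<le> C * N f" and lower: "\<And>f. c * N f \<le> N (L f)" and "0 < c"
  shows "\<exists>c' C'. 0 < c' \<and> (\<forall>f. c' * N' f \<le> N' (L f) \<and> N' (L f) \<le> C' * N' f)"
proof -
  obtain a b where ab: "0 < a" "0 < b" "\<And>z. a * N z \<le> N' z \<and> N' z \<le> b * N z"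
    using equiv unfolding equiv_qnorm_def by blast
  have N_nonneg: "0 \<le> N z" for z
    using ab(2) ab(3)[of z] nonneg[of z] by (meson order_trans zero_le_mult_iff not_le)
  have "c * a / b * N' f \<le> N' (L f) \<and> N' (L f) \<le> b * max C 0 / a * N' f" for f
  proof
    have "c * a / b * N' f \<le> c * a * N f"
      using ab \<open>0 < c\<close> by (simp add: field_simps mult_left_mono)
    also have "\<dots> \<le> a * N (L f)" using lower[of f] ab(1) by (simp add: mult.commute mult.left_commute)
    also have "\<dots> \<le> N' (L f)" using ab(3) by blast
    finally show "c * a / b * N' f \<le> N' (L f)" .
    have "N' (L f) \<le> b * N (L f)" using ab(3) by blast
    also have "\<dots> \<le> b * (max C 0 * N f)"
    proof (intro mult_left_mono)
      show "N (L f) \<le> max C 0 * N f"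
        using upper[of f] mult_right_mono[of C "max C 0" "N f"] N_nonneg[of f] by simp
    qed (use ab(2) in simp)
    also have "\<dots> = b * max C 0 / a * (a * N f)" using ab(1) by simp
    also have "\<dots> \<le> b * max C 0 / a * N' f" using ab by (intro mult_left_mono) auto
    finally show "N' (L f) \<le> b * max C 0 / a * N' f" .
  qed
  moreover have "0 < c * a / b" using ab \<open>0 < c\<close> by simp
  ultimately show ?thesis by blast
qed

section \<open>Extending isometries in complete p-normed spaces\<close>

locale p_normed_space = vector_space sc
  for sc :: "'k::real_normed_field \<Rightarrow> 'a::ab_group_add \<Rightarrow> 'a" +
  fixes p :: real and M :: "'a \<Rightarrow> real"
  assumes p_pos: "0 < p" and p_norm: "p_norm sc p M"
begin

lemma M_nonneg: "0 \<le> M u"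
  and M_eq_0_iff: "M u = 0 \<longleftrightarrow> u = 0"
  and M_scale: "M (sc c u) = norm c * M u"
  and M_powr_add: "M (u + v) powr p \<le> M u powr p + M v powr p"
  using p_norm unfolding p_norm_def by blast+

lemma M_minus: "M (- u) = M u"
  using M_scale[of "-1" u] by (simp add: scale_minus_left)

text \<open>The p-th power of a p-norm is subadditive, so it plays the role of a metric.\<close>

definition Mp :: "'a \<Rightarrow> real" where
  "Mp u = M u powr p"

lemma Mp_nonneg: "0 \<le> Mp u"
  by (simp add: Mp_def)

lemma Mp_eq_0_iff: "Mp u = 0 \<longleftrightarrow> u = 0"
  by (simp add: Mp_def M_eq_0_iff)

lemma M_eq_Mp_powr: "M u = Mp u powr (1 / p)"
  using p_pos M_nonneg[of u] by (simp add: Mp_def powr_powr)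

lemma Mp_add: "Mp (u + v) \<le> Mp u + Mp v"
  unfolding Mp_def by (rule M_powr_add)

lemma Mp_scale: "Mp (sc c u) = norm c powr p * Mp u"
  by (simp add: Mp_def M_scale M_nonneg powr_mult)

lemma Mp_le_diff_add: "Mp u \<le> Mp (u - v) + Mp v"
  using Mp_add[of "u - v" v] by simp

lemma Mp_minus_commute: "Mp (u - v) = Mp (v - u)"
  using M_minus[of "u - v"] by (simp add: Mp_def)

lemma Mp_triangle: "Mp (u - w) \<le> Mp (u - v) + Mp (v - w)"
  using Mp_add[of "u - v" "v - w"] by simp

lemma M_less_iff: "0 < e \<Longrightarrow> M u < e \<longleftrightarrow> Mp u < e powr p"
proof
  show "M u < e \<Longrightarrow> Mp u < e powr p"
    unfolding Mp_def using p_pos M_nonneg by (rule powr_less_mono2)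
  show "Mp u < e powr p \<Longrightarrow> M u < e" if "0 < e"
    unfolding Mp_def using p_pos that by (meson not_le powr_mono2 less_imp_le)
qed

lemma eq_0_if_Mp_small: "(\<And>e. 0 < e \<Longrightarrow> Mp u < e) \<Longrightarrow> u = 0"
  using Mp_nonneg[of u] Mp_eq_0_iff[of u] by (metis less_irrefl order_le_less)

lemma qclosure_eq_Mp: "qclosure M Y = {f. \<forall>e>0. \<exists>a\<in>Y. Mp (f - a) < e}"
proof -
  have "(\<forall>e>0. \<exists>a\<in>Y. M (f - a) < e) \<longleftrightarrow> (\<forall>e>0. \<exists>a\<in>Y. Mp (f - a) < e)" for f
  proof (intro iffI allI impI)
    fix e :: real assume H: "\<forall>e>0. \<exists>a\<in>Y. M (f - a) < e" and "0 < e"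
    have "0 < e powr (1 / p)" using \<open>0 < e\<close> by simp
    then obtain a where "a \<in> Y" "M (f - a) < e powr (1 / p)" using H by blast
    moreover have "(e powr (1 / p)) powr p = e" using p_pos \<open>0 < e\<close> by (simp add: powr_powr)
    ultimately show "\<exists>a\<in>Y. Mp (f - a) < e" using M_less_iff[of "e powr (1 / p)"] \<open>0 < e\<close> by auto
  next
    fix e :: real assume H: "\<forall>e>0. \<exists>a\<in>Y. Mp (f - a) < e" and "0 < e"
    have "0 < e powr p" using \<open>0 < e\<close> by simp
    then obtain a where "a \<in> Y" "Mp (f - a) < e powr p" using H by blast
    then show "\<exists>a\<in>Y. M (f - a) < e" using M_less_iff \<open>0 < e\<close> by blast
  qed
  then show ?thesis unfolding qclosure_def by blast
qed

lemma qcomplete_Mp: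
  assumes "qcomplete M"
  shows "qcomplete Mp"
  unfolding qcomplete_def
proof (intro allI impI)
  fix s :: "nat \<Rightarrow> 'a"
  assume cauchy: "\<forall>e>0. \<exists>K. \<forall>m\<ge>K. \<forall>n\<ge>K. Mp (s m - s n) < e"
  have "\<exists>K. \<forall>m\<ge>K. \<forall>n\<ge>K. M (s m - s n) < e" if "0 < e" for e
    using cauchy[rule_format, of "e powr p"] that by (simp add: M_less_iff)
  then obtain y where "(\<lambda>n. M (s n - y)) \<longlonglongrightarrow> 0"
    using assms unfolding qcomplete_def by blast
  then have "(\<lambda>n. Mp (s n - y)) \<longlonglongrightarrow> 0"
    unfolding Mp_def using p_pos M_nonneg by (intro tendsto_zero_powrI) auto
  then show "\<exists>y. (\<lambda>n. Mp (s n - y)) \<longlonglongrightarrow> 0" ..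
qed

definition isometric_on :: "'a set \<Rightarrow> ('a \<Rightarrow> 'a) \<Rightarrow> bool" where
  "isometric_on A T \<longleftrightarrow> (\<forall>a\<in>A. \<forall>a'\<in>A. M (T a - T a') = M (a - a'))"

lemma isometric_onD: "isometric_on A T \<Longrightarrow> a \<in> A \<Longrightarrow> a' \<in> A \<Longrightarrow> Mp (T a - T a') = Mp (a - a')"
  by (simp add: isometric_on_def Mp_def)

lemma isometric_on_inv_into:
  assumes "isometric_on A T"
  shows "isometric_on (T ` A) (inv_into A T)"
  unfolding isometric_on_def
proof (intro ballI)
  fix b b' assume "b \<in> T ` A" "b' \<in> T ` A"
  then have "inv_into A T b \<in> A" "inv_into A T b' \<in> A" "T (inv_into A T b) = b" "T (inv_into A T b') = b'"
    by (auto simp: inv_into_into f_inv_into_f)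
  then show "M (inv_into A T b - inv_into A T b') = M (b - b')"
    using assms unfolding isometric_on_def by metis
qed

lemma isometric_on_if_linear:
  assumes "subspace A" and add: "\<And>a b. a \<in> A \<Longrightarrow> b \<in> A \<Longrightarrow> T (a + b) = T a + T b"
    and norm: "\<And>a. a \<in> A \<Longrightarrow> M (T a) = M a"
  shows "isometric_on A T"
  unfolding isometric_on_def
proof (intro ballI)
  fix a a' assume "a \<in> A" "a' \<in> A"
  then have "a - a' \<in> A" using \<open>subspace A\<close> by (simp add: subspace_diff)
  then have "T a = T (a - a') + T a'" using add[of "a - a'" a'] \<open>a' \<in> A\<close> by simp
  then show "M (T a - T a') = M (a - a')" using norm[OF \<open>a - a' \<in> A\<close>] by simp
qed

definition in_graph_closure :: "'a set \<Rightarrow> ('a \<Rightarrow> 'a) \<Rightarrow> 'a \<Rightarrow> 'a \<Rightarrow> bool" where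
  "in_graph_closure A T f y \<longleftrightarrow> (\<forall>e>0. \<exists>a\<in>A. Mp (f - a) < e \<and> Mp (y - T a) < e)"

lemma in_graph_closure_self: "a \<in> A \<Longrightarrow> in_graph_closure A T a (T a)"
  unfolding in_graph_closure_def using Mp_eq_0_iff[of 0] by force

lemma in_graph_closure_qclosure:
  assumes "in_graph_closure A T f y"
  shows "f \<in> qclosure M A" and "y \<in> qclosure M (T ` A)"
  using assms unfolding in_graph_closure_def qclosure_eq_Mp by blast+

lemma in_graph_closure_inv_into:
  assumes "in_graph_closure (T ` A) (inv_into A T) b f"
  shows "in_graph_closure A T f b"
  unfolding in_graph_closure_def
proof (intro allI impI)
  fix e :: real assume "0 < e"
  then obtain b' where "b' \<in> T ` A" "Mp (b - b') < e" "Mp (f - inv_into A T b') < e"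
    using assms unfolding in_graph_closure_def by blast
  then show "\<exists>a\<in>A. Mp (f - a) < e \<and> Mp (b - T a) < e"
    by (intro bexI[of _ "inv_into A T b'"]) (auto simp: inv_into_into f_inv_into_f)
qed

lemma in_graph_closure_unique:
  assumes iso: "isometric_on A T" and y: "in_graph_closure A T f y" and y': "in_graph_closure A T f y'"
  shows "y = y'"
proof -
  have "Mp (y - y') < e" if "0 < e" for e
  proof -
    obtain a where a: "a \<in> A" "Mp (f - a) < e / 4" "Mp (y - T a) < e / 4"
      using y \<open>0 < e\<close> unfolding in_graph_closure_def by (meson zero_less_divide_iff zero_less_numeral)
    obtain a' where a': "a' \<in> A" "Mp (f - a') < e / 4" "Mp (y' - T a') < e / 4"
      using y' \<open>0 < e\<close> unfolding in_graph_closure_def by (meson zero_less_divide_iff zero_less_numeral)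
    have "Mp (T a - T a') = Mp (a - a')" using isometric_onD[OF iso a(1) a'(1)] .
    also have "\<dots> \<le> Mp (a - f) + Mp (f - a')" by (rule Mp_triangle)
    finally have "Mp (T a - T a') < e / 2" using a(2) a'(2) Mp_minus_commute[of a f] by simp
    moreover have "Mp (y - y') \<le> Mp (y - T a) + (Mp (T a - T a') + Mp (T a' - y'))"
      using Mp_triangle[of y y' "T a"] Mp_triangle[of "T a" y' "T a'"] by linarith
    moreover have "Mp (T a' - y') = Mp (y' - T a')" by (rule Mp_minus_commute)
    ultimately show ?thesis using a(3) a'(3) by linarith
  qed
  then show ?thesis using eq_0_if_Mp_small[of "y - y'"] by simp
qed

lemma qclosure_sequence:
  assumes "f \<in> qclosure M A"
  obtains a :: "nat \<Rightarrow> 'a" where "\<forall>n. a n \<in> A" and "\<forall>e>0. \<exists>K. \<forall>n\<ge>K. Mp (f - a n) < e"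
proof -
  have "\<exists>a\<in>A. Mp (f - a) < inverse (Suc n)" for n
    using assms by (simp add: qclosure_eq_Mp)
  then obtain a where a: "\<And>n. a n \<in> A" "\<And>n. Mp (f - a n) < inverse (Suc n)" by metis
  have "\<exists>K. \<forall>n\<ge>K. Mp (f - a n) < e" if "0 < e" for e
  proof -
    obtain K where "inverse (Suc K) < e" using reals_Archimedean[OF \<open>0 < e\<close>] by blast
    moreover have "inverse (Suc n) \<le> inverse (Suc K)" if "K \<le> n" for n :: nat
      using that by (simp add: le_imp_inverse_le)
    ultimately show ?thesis using a(2) by (meson less_le_trans less_trans)
  qed
  with a(1) show thesis using that by blast
qed

lemma in_graph_closure_exists:
  assumes complete: "qcomplete M" and iso: "isometric_on A T" and f: "f \<in> qclosure M A"
  shows "\<exists>y. in_graph_closure A T f y"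
proof -
  obtain a :: "nat \<Rightarrow> 'a" where a: "\<forall>n. a n \<in> A" and close: "\<forall>e>0. \<exists>K. \<forall>n\<ge>K. Mp (f - a n) < e"
    by (rule qclosure_sequence[OF f])
  have "\<exists>K. \<forall>m\<ge>K. \<forall>n\<ge>K. Mp (T (a m) - T (a n)) < e" if "0 < e" for e
  proof -
    obtain K where K: "\<forall>n\<ge>K. Mp (f - a n) < e / 2" using close \<open>0 < e\<close> by (meson half_gt_zero)
    have "Mp (T (a m) - T (a n)) < e" if "K \<le> m" "K \<le> n" for m n
    proof -
      have "Mp (T (a m) - T (a n)) = Mp (a m - a n)" using isometric_onD[OF iso] a by blast
      also have "\<dots> \<le> Mp (a m - f) + Mp (f - a n)" by (rule Mp_triangle)
      moreover have "Mp (f - a m) < e / 2" "Mp (f - a n) < e / 2" using K that by simp_all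
      ultimately show ?thesis using Mp_minus_commute[of "a m" f] by linarith
    qed
    then show ?thesis by blast
  qed
  then obtain y where y: "(\<lambda>n. Mp (T (a n) - y)) \<longlonglongrightarrow> 0"
    using qcomplete_Mp[OF complete, unfolded qcomplete_def, rule_format, of "\<lambda>n. T (a n)"] by blast
  have "in_graph_closure A T f y"
    unfolding in_graph_closure_def
  proof (intro allI impI)
    fix e :: real assume "0 < e"
    obtain K1 where K1: "\<forall>n\<ge>K1. Mp (f - a n) < e" using close \<open>0 < e\<close> by blast
    obtain K2 where K2: "\<forall>n\<ge>K2. norm (Mp (T (a n) - y) - 0) < e"
      using LIMSEQ_D[OF y \<open>0 < e\<close>] by blast
    define n where "n = max K1 K2"
    have "Mp (f - a n) < e" using K1 by (simp add: n_def)
    moreover have "Mp (y - T (a n)) < e"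
      using K2 Mp_nonneg Mp_minus_commute[of y "T (a n)"] by (simp add: n_def)
    ultimately show "\<exists>a\<in>A. Mp (f - a) < e \<and> Mp (y - T a) < e" using a by blast
  qed
  then show ?thesis ..
qed


definition closure_ext :: "'a set \<Rightarrow> ('a \<Rightarrow> 'a) \<Rightarrow> 'a \<Rightarrow> 'a" where
  "closure_ext A T f = (SOME y. in_graph_closure A T f y)"

context
  fixes A :: "'a set" and T :: "'a \<Rightarrow> 'a"
  assumes complete: "qcomplete M" and subspace_A: "subspace A"
    and T_add: "\<And>a b. a \<in> A \<Longrightarrow> b \<in> A \<Longrightarrow> T (a + b) = T a + T b"
    and T_scale: "\<And>c a. a \<in> A \<Longrightarrow> T (sc c a) = sc c (T a)"
    and M_T: "\<And>a. a \<in> A \<Longrightarrow> M (T a) = M a"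
begin

lemma isometric_on_T: "isometric_on A T"
  using subspace_A T_add M_T by (rule isometric_on_if_linear)

lemma in_graph_closure_add:
  assumes "in_graph_closure A T f y" and "in_graph_closure A T g z"
  shows "in_graph_closure A T (f + g) (y + z)"
  unfolding in_graph_closure_def
proof (intro allI impI)
  fix e :: real assume "0 < e"
  then have "0 < e / 2" by simp
  then obtain a b where "a \<in> A" "Mp (f - a) < e / 2" "Mp (y - T a) < e / 2"
    and "b \<in> A" "Mp (g - b) < e / 2" "Mp (z - T b) < e / 2"
    using assms unfolding in_graph_closure_def by meson
  moreover have "Mp (f + g - (a + b)) \<le> Mp (f - a) + Mp (g - b)"
    using Mp_add[of "f - a" "g - b"] by (simp add: algebra_simps)
  moreover have "Mp (y + z - (T a + T b)) \<le> Mp (y - T a) + Mp (z - T b)"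
    using Mp_add[of "y - T a" "z - T b"] by (simp add: algebra_simps)
  ultimately show "\<exists>d\<in>A. Mp (f + g - d) < e \<and> Mp (y + z - T d) < e"
    using subspace_add[OF subspace_A] T_add by (intro bexI[of _ "a + b"]) auto
qed

lemma in_graph_closure_scale:
  assumes "in_graph_closure A T f y"
  shows "in_graph_closure A T (sc c f) (sc c y)"
  unfolding in_graph_closure_def
proof (intro allI impI)
  fix e :: real assume "0 < e"
  define k where "k = norm c powr p"
  have k: "0 \<le> k" by (simp add: k_def)
  have small: "k * q < e" if "0 \<le> q" "q < e / (k + 1)" for q
  proof -
    have "k * q \<le> (k + 1) * q" using that(1) by (simp add: distrib_right)
    also have "\<dots> < (k + 1) * (e / (k + 1))" using that(2) k by (intro mult_strict_left_mono) auto
    finally show ?thesis using k by simp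
  qed
  have "0 < e / (k + 1)" using \<open>0 < e\<close> k by simp
  then obtain a where "a \<in> A" "Mp (f - a) < e / (k + 1)" "Mp (y - T a) < e / (k + 1)"
    using assms unfolding in_graph_closure_def by meson
  moreover have "Mp (sc c f - sc c a) = k * Mp (f - a)" "Mp (sc c y - sc c (T a)) = k * Mp (y - T a)"
    by (simp_all add: k_def Mp_scale scale_right_diff_distrib[symmetric])
  ultimately show "\<exists>d\<in>A. Mp (sc c f - d) < e \<and> Mp (sc c y - T d) < e"
    using small Mp_nonneg subspace_scale[OF subspace_A] T_scale by (intro bexI[of _ "sc c a"]) auto
qed

lemma in_graph_closure_Mp_eq:
  assumes "in_graph_closure A T f y"
  shows "Mp y = Mp f"
proof -
  have "Mp y \<le> Mp f + e \<and> Mp f \<le> Mp y + e" if "0 < e" for e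
  proof -
    have "0 < e / 2" using that by simp
    then obtain a where a: "a \<in> A" "Mp (f - a) < e / 2" "Mp (y - T a) < e / 2"
      using assms unfolding in_graph_closure_def by blast
    have "Mp (T a) = Mp a" using M_T[OF a(1)] by (simp add: Mp_def)
    then show ?thesis
      using a Mp_le_diff_add[of y "T a"] Mp_le_diff_add[of a f] Mp_le_diff_add[of f a]
        Mp_le_diff_add[of "T a" y] Mp_minus_commute[of a f] Mp_minus_commute[of "T a" y]
      by linarith
  qed
  then show ?thesis by (meson antisym field_le_epsilon)
qed

lemma in_graph_closure_closure_ext:
  assumes "f \<in> qclosure M A"
  shows "in_graph_closure A T f (closure_ext A T f)"
  unfolding closure_ext_def by (rule someI_ex, rule in_graph_closure_exists[OF complete isometric_on_T assms])

lemma closure_ext_eqI: "in_graph_closure A T f y \<Longrightarrow> closure_ext A T f = y"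
  using in_graph_closure_unique[OF isometric_on_T] in_graph_closure_closure_ext in_graph_closure_qclosure(1)
  by blast

lemma closure_ext_eq: "a \<in> A \<Longrightarrow> closure_ext A T a = T a"
  by (intro closure_ext_eqI in_graph_closure_self)

lemma closure_ext_add:
  "u \<in> qclosure M A \<Longrightarrow> v \<in> qclosure M A \<Longrightarrow> closure_ext A T (u + v) = closure_ext A T u + closure_ext A T v"
  by (intro closure_ext_eqI in_graph_closure_add in_graph_closure_closure_ext)

lemma closure_ext_scale:
  "u \<in> qclosure M A \<Longrightarrow> closure_ext A T (sc c u) = sc c (closure_ext A T u)"
  by (intro closure_ext_eqI in_graph_closure_scale in_graph_closure_closure_ext)

lemma M_closure_ext: "u \<in> qclosure M A \<Longrightarrow> M (closure_ext A T u) = M u"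
  using in_graph_closure_Mp_eq[OF in_graph_closure_closure_ext] by (simp add: M_eq_Mp_powr)

lemma inj_on_closure_ext: "inj_on (closure_ext A T) (qclosure M A)"
proof (rule inj_onI)
  fix u v assume u: "u \<in> qclosure M A" and v: "v \<in> qclosure M A"
    and eq: "closure_ext A T u = closure_ext A T v"
  have "in_graph_closure A T (u + sc (-1) v) (closure_ext A T u + sc (-1) (closure_ext A T v))"
    using u v by (intro in_graph_closure_add in_graph_closure_scale in_graph_closure_closure_ext)
  from in_graph_closure_Mp_eq[OF this] eq have "Mp (u - v) = Mp 0"
    by (simp add: scale_minus_left)
  then show "u = v" using Mp_eq_0_iff[of 0] Mp_eq_0_iff[of "u - v"] by simp
qed

lemma closure_ext_onto: "qclosure M (T ` A) \<subseteq> closure_ext A T ` qclosure M A"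
proof
  fix b assume "b \<in> qclosure M (T ` A)"
  then obtain f where "in_graph_closure (T ` A) (inv_into A T) b f"
    using in_graph_closure_exists[OF complete isometric_on_inv_into[OF isometric_on_T]] by blast
  then have "in_graph_closure A T f b" by (rule in_graph_closure_inv_into)
  then show "b \<in> closure_ext A T ` qclosure M A"
    using closure_ext_eqI in_graph_closure_qclosure(1) by (metis image_eqI)
qed

lemma sub_isomorphism_closure_ext:
  "sub_isomorphism sc M (qclosure M A) (qclosure M (T ` A)) (closure_ext A T)"
proof -
  have "closure_ext A T ` qclosure M A \<subseteq> qclosure M (T ` A)"
    using in_graph_closure_qclosure(2)[OF in_graph_closure_closure_ext] by blast
  then have "bij_betw (closure_ext A T) (qclosure M A) (qclosure M (T ` A))"
    using inj_on_closure_ext closure_ext_onto by (auto simp: bij_betw_def)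
  moreover have "\<exists>C. \<forall>u\<in>qclosure M A. M (closure_ext A T u) \<le> C * M u"
    and "\<exists>c>0. \<forall>u\<in>qclosure M A. c * M u \<le> M (closure_ext A T u)"
    using M_closure_ext by (auto intro!: exI[of _ 1])
  ultimately show ?thesis
    unfolding sub_isomorphism_def using closure_ext_add closure_ext_scale by blast
qed

end

end

section \<open>Extending a p-norm from a subspace\<close>

text \<open>ext_powr is the inf-convolution of N1^p on V with (D * Np)^p; the factor D makes it agree
  with N1^p on V.\<close>

locale p_norm_extension = p_normed_space sc p Np
  for sc :: "'k::real_normed_field \<Rightarrow> 'a::ab_group_add \<Rightarrow> 'a" and p Np +
  fixes V :: "'a set" and N1 :: "'a \<Rightarrow> real" and D :: real
  assumes subspace_V: "subspace V"
    and N1_scale: "f \<in> V \<Longrightarrow> N1 (sc c f) = norm c * N1 f"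
    and N1_powr_add: "f \<in> V \<Longrightarrow> g \<in> V \<Longrightarrow> N1 (f + g) powr p \<le> N1 f powr p + N1 g powr p"
    and N1_le: "f \<in> V \<Longrightarrow> N1 f \<le> D * Np f"
    and le_N1: "f \<in> V \<Longrightarrow> Np f \<le> D * N1 f"
    and D_ge_1: "1 \<le> D"
begin

lemma N1_0: "N1 0 = 0"
  using N1_scale[of 0 0] subspace_0[OF subspace_V] by simp

lemma N1_nonneg: "f \<in> V \<Longrightarrow> 0 \<le> N1 f"
  using order_trans[OF M_nonneg le_N1[of f]] D_ge_1 by (simp add: zero_le_mult_iff)

lemma D_powr_Mp: "(D * Np u) powr p = D powr p * Mp u"
  using D_ge_1 M_nonneg[of u] by (simp add: Mp_def powr_mult)

definition ext_powr :: "'a \<Rightarrow> real" where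
  "ext_powr f = Inf ((\<lambda>g. N1 g powr p + D powr p * Mp (f - g)) ` V)"

definition ext_norm :: "'a \<Rightarrow> real" where
  "ext_norm f = ext_powr f powr (1 / p)"

lemma ext_powr_le: "g \<in> V \<Longrightarrow> ext_powr f \<le> N1 g powr p + D powr p * Mp (f - g)"
  unfolding ext_powr_def
  by (rule cInf_lower) (auto intro!: bdd_belowI2[of _ 0] add_nonneg_nonneg mult_nonneg_nonneg Mp_nonneg)

lemma ext_powr_greatest:
  "(\<And>g. g \<in> V \<Longrightarrow> B \<le> N1 g powr p + D powr p * Mp (f - g)) \<Longrightarrow> B \<le> ext_powr f"
  unfolding ext_powr_def using subspace_0[OF subspace_V] by (intro cInf_greatest) auto

lemma ext_powr_nonneg: "0 \<le> ext_powr f"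
  using Mp_nonneg by (intro ext_powr_greatest add_nonneg_nonneg mult_nonneg_nonneg) auto

lemma ext_norm_powr: "ext_norm f powr p = ext_powr f"
  unfolding ext_norm_def using p_pos ext_powr_nonneg by (simp add: powr_powr)

lemma ext_norm_nonneg: "0 \<le> ext_norm f"
  by (simp add: ext_norm_def)

lemma ext_powr_eq:
  assumes f: "f \<in> V"
  shows "ext_powr f = N1 f powr p"
proof (rule antisym)
  show "ext_powr f \<le> N1 f powr p"
    using ext_powr_le[OF f, of f] Mp_eq_0_iff[of 0] by simp
  show "N1 f powr p \<le> ext_powr f"
  proof (rule ext_powr_greatest)
    fix g assume g: "g \<in> V"
    have fg: "f - g \<in> V" using subspace_diff[OF subspace_V f g] .
    have "N1 f powr p \<le> N1 g powr p + N1 (f - g) powr p"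
      using N1_powr_add[OF g fg] by simp
    also have "N1 (f - g) powr p \<le> (D * Np (f - g)) powr p"
      using p_pos N1_le[OF fg] order_trans[OF M_nonneg le_N1[OF fg]] D_ge_1
      by (intro powr_mono2) (auto simp: zero_le_mult_iff)
    finally show "N1 f powr p \<le> N1 g powr p + D powr p * Mp (f - g)" by (simp add: D_powr_Mp)
  qed
qed

lemma ext_norm_eq: "f \<in> V \<Longrightarrow> ext_norm f = N1 f"
  using ext_powr_eq[of f] p_pos order_trans[OF M_nonneg le_N1[of f]] D_ge_1
  by (simp add: ext_norm_def powr_powr zero_le_mult_iff)

lemma ext_powr_add: "ext_powr (f + h) \<le> ext_powr f + ext_powr h"
proof -
  have split: "ext_powr (f + h) \<le> (N1 g1 powr p + D powr p * Mp (f - g1)) + (N1 g2 powr p + D powr p * Mp (h - g2))"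
    if g1: "g1 \<in> V" and g2: "g2 \<in> V" for g1 g2
  proof -
    have "ext_powr (f + h) \<le> N1 (g1 + g2) powr p + D powr p * Mp ((f - g1) + (h - g2))"
      using ext_powr_le[OF subspace_add[OF subspace_V g1 g2], of "f + h"] by (simp add: algebra_simps)
    also have "\<dots> \<le> (N1 g1 powr p + N1 g2 powr p) + D powr p * (Mp (f - g1) + Mp (h - g2))"
      using N1_powr_add[OF g1 g2] Mp_add by (intro add_mono mult_left_mono) auto
    finally show ?thesis by (simp add: algebra_simps)
  qed
  have "ext_powr (f + h) - (N1 g2 powr p + D powr p * Mp (h - g2)) \<le> ext_powr f" if "g2 \<in> V" for g2
    using split[OF _ that] by (intro ext_powr_greatest) (simp add: algebra_simps)
  then have "ext_powr (f + h) - ext_powr f \<le> ext_powr h"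
    by (intro ext_powr_greatest) (simp add: algebra_simps)
  then show ?thesis by simp
qed

lemma ext_powr_scale_le: "ext_powr (sc c f) \<le> norm c powr p * ext_powr f"
proof (cases "c = 0")
  case True
  then show ?thesis
    using ext_powr_eq[OF subspace_0[OF subspace_V]] N1_0 p_pos by simp
next
  case False
  have "ext_powr (sc c f) / norm c powr p \<le> N1 g powr p + D powr p * Mp (f - g)" if g: "g \<in> V" for g
  proof -
    have "ext_powr (sc c f) \<le> N1 (sc c g) powr p + D powr p * Mp (sc c f - sc c g)"
      by (rule ext_powr_le[OF subspace_scale[OF subspace_V g]])
    also have "N1 (sc c g) powr p = norm c powr p * N1 g powr p"
      using N1_nonneg[OF g] by (simp add: N1_scale[OF g] powr_mult)
    also have "Mp (sc c f - sc c g) = norm c powr p * Mp (f - g)"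
      by (simp add: Mp_scale scale_right_diff_distrib[symmetric])
    also have "norm c powr p * N1 g powr p + D powr p * (norm c powr p * Mp (f - g))
        = norm c powr p * (N1 g powr p + D powr p * Mp (f - g))"
      by (simp add: distrib_left mult.left_commute)
    finally show ?thesis using False by (simp add: field_simps)
  qed
  then have "ext_powr (sc c f) / norm c powr p \<le> ext_powr f" by (rule ext_powr_greatest)
  then show ?thesis using False by (simp add: field_simps)
qed

lemma ext_powr_scale: "ext_powr (sc c f) = norm c powr p * ext_powr f"
proof (cases "c = 0")
  case True
  then show ?thesis using ext_powr_scale_le[of c f] ext_powr_nonneg[of "sc c f"] p_pos by simp
next
  case False
  have "ext_powr f \<le> norm (inverse c) powr p * ext_powr (sc c f)"
    using ext_powr_scale_le[of "inverse c" "sc c f"] False by simp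
  then have "norm c powr p * ext_powr f \<le> (norm c powr p * norm (inverse c) powr p) * ext_powr (sc c f)"
    by (simp add: mult.assoc mult_left_mono)
  also have "norm c powr p * norm (inverse c) powr p = 1"
    using False by (simp add: powr_mult[symmetric] norm_inverse)
  finally have "norm c powr p * ext_powr f \<le> ext_powr (sc c f)" by simp
  then show ?thesis using ext_powr_scale_le[of c f] by simp
qed

lemma ext_norm_scale: "ext_norm (sc c f) = norm c * ext_norm f"
  unfolding ext_norm_def ext_powr_scale using p_pos ext_powr_nonneg
  by (simp add: powr_mult powr_powr)

lemma ext_norm_le: "ext_norm f \<le> D * Np f"
proof -
  have "ext_powr f \<le> (D * Np f) powr p"
    using ext_powr_le[OF subspace_0[OF subspace_V], of f] N1_0 p_pos by (simp add: D_powr_Mp)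
  then have "ext_norm f \<le> ((D * Np f) powr p) powr (1 / p)"
    unfolding ext_norm_def using ext_powr_nonneg p_pos by (intro powr_mono2) auto
  then show ?thesis using p_pos D_ge_1 M_nonneg[of f] by (simp add: powr_powr)
qed

lemma le_ext_norm: "Np f \<le> D * ext_norm f"
proof -
  have D: "0 < D" using D_ge_1 by simp
  have "Mp f / D powr p \<le> ext_powr f"
  proof (rule ext_powr_greatest)
    fix g assume g: "g \<in> V"
    have "Mp f / D powr p \<le> Mp g / D powr p + Mp (f - g) / D powr p"
      using Mp_le_diff_add[of f g] D by (simp add: add_divide_distrib[symmetric] divide_right_mono)
    also have "Mp g / D powr p \<le> N1 g powr p"
      using le_N1[OF g] D p_pos M_nonneg[of g]
      by (simp add: Mp_def divide_le_eq powr_mult[symmetric] powr_mono2 mult.commute)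
    also have "Mp (f - g) / D powr p \<le> D powr p * Mp (f - g)"
    proof -
      have "1 \<le> D powr p" using D_ge_1 p_pos by (simp add: ge_one_powr_ge_zero)
      then have "1 \<le> D powr p * D powr p" by (metis mult_mono' order_trans zero_le_one mult_1)
      then have "Mp (f - g) \<le> (D powr p * D powr p) * Mp (f - g)"
        using mult_right_mono[OF _ Mp_nonneg[of "f - g"]] by fastforce
      then show ?thesis using D by (simp add: divide_le_eq mult_ac)
    qed
    finally show "Mp f / D powr p \<le> N1 g powr p + D powr p * Mp (f - g)" by simp
  qed
  then have "(Np f / D) powr p \<le> ext_norm f powr p"
    using D M_nonneg[of f] by (simp add: ext_norm_powr Mp_def powr_divide)
  then have "Np f / D \<le> ext_norm f"
    using p_pos ext_norm_nonneg[of f] by (meson not_le powr_less_mono2)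
  then show ?thesis using D by (simp add: field_simps)
qed

lemma ext_norm_eq_0_iff: "ext_norm f = 0 \<longleftrightarrow> f = 0"
  using le_ext_norm[of f] ext_norm_le[of f] M_nonneg[of f] M_eq_0_iff[of f] ext_norm_nonneg[of f]
  by (metis antisym mult_zero_right)

lemma p_norm_ext_norm: "p_norm sc p ext_norm"
  unfolding p_norm_def
  using ext_norm_nonneg ext_norm_eq_0_iff ext_norm_scale ext_powr_add by (simp add: ext_norm_powr)

lemma equiv_qnorm_ext_norm: "equiv_qnorm Np ext_norm"
  unfolding equiv_qnorm_def
proof (intro exI conjI allI)
  show "0 < 1 / D" "0 < D" using D_ge_1 by simp_all
  fix f
  show "1 / D * Np f \<le> ext_norm f" using le_ext_norm[of f] D_ge_1 by (simp add: field_simps)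
  show "ext_norm f \<le> D * Np f" by (rule ext_norm_le)
qed

end

locale biorthogonal_system = vector_space sc
  for sc :: "'k::real_normed_field \<Rightarrow> 'a::ab_group_add \<Rightarrow> 'a" +
  fixes x :: "nat \<Rightarrow> 'a" and xs :: "nat \<Rightarrow> 'a \<Rightarrow> 'k"
  assumes coord_add: "xs n (f + g) = xs n f + xs n g"
    and coord_scale: "xs n (sc c f) = c * xs n f"
    and coord_basis: "xs n (x k) = (if n = k then 1 else 0)"
begin

definition basis_span :: "'a set" where
  "basis_span = span (range x)"

definition supp :: "'a \<Rightarrow> nat set" where
  "supp f = {n. xs n f \<noteq> 0}"

text \<open>shift \<rho> is the operator L_\<rho> of the paper, restricted to finitely supported vectors.\<close>

definition shift :: "(nat \<Rightarrow> nat) \<Rightarrow> 'a \<Rightarrow> 'a" where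
  "shift \<rho> f = (\<Sum>n\<in>supp f. sc (xs n f) (x (\<rho> n)))"

lemma coord_zero: "xs n 0 = 0"
  using coord_add[of n 0 0] by simp

lemma coord_sum: "xs n (sum g A) = (\<Sum>a\<in>A. xs n (g a))"
  by (induction A rule: infinite_finite_induct) (auto simp: coord_zero coord_add)

lemma supp_add: "supp (f + g) \<subseteq> supp f \<union> supp g"
  by (auto simp: supp_def coord_add)

lemma supp_scale: "supp (sc c f) \<subseteq> supp f"
  by (auto simp: supp_def coord_scale)

lemma supp_basis: "supp (x k) = {k}"
  by (auto simp: supp_def coord_basis)

lemma span_expansion:
  assumes "f \<in> span (x ` S)"
  shows "finite (supp f) \<and> supp f \<subseteq> S \<and>
    (\<forall>F. finite F \<and> supp f \<subseteq> F \<longrightarrow> f = (\<Sum>n\<in>F. sc (xs n f) (x n)))"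
  using assms
proof (induction rule: span_induct_alt)
  case base
  then show ?case by (simp add: supp_def coord_zero)
next
  case (step c v y)
  then obtain k where k: "k \<in> S" "v = x k" by auto
  have coord: "xs n (sc c v + y) = (if n = k then c else 0) + xs n y" for n
    by (simp add: coord_add coord_scale k coord_basis)
  have sub: "supp (sc c v + y) \<subseteq> insert k (supp y)"
    by (auto simp: supp_def coord split: if_splits)
  have "sc c v + y = (\<Sum>n\<in>F. sc (xs n (sc c v + y)) (x n))"
    if F: "finite F" "supp (sc c v + y) \<subseteq> F" for F
  proof -
    let ?G = "insert k (F \<union> supp y)"
    have G: "finite ?G" "supp y \<subseteq> ?G" using F step by auto
    have "(\<Sum>n\<in>F. sc (xs n (sc c v + y)) (x n)) = (\<Sum>n\<in>?G. sc (xs n (sc c v + y)) (x n))"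
      using F G by (intro sum.mono_neutral_left) (auto simp: supp_def)
    also have "\<dots> = (\<Sum>n\<in>?G. sc (if n = k then c else 0) (x n)) + (\<Sum>n\<in>?G. sc (xs n y) (x n))"
      by (simp add: coord scale_left_distrib sum.distrib)
    also have "(\<Sum>n\<in>?G. sc (if n = k then c else 0) (x n)) = sc c v"
      using G(1) k by (simp add: if_distrib[of "\<lambda>r. sc r _"] sum.delta cong: if_cong)
    also have "(\<Sum>n\<in>?G. sc (xs n y) (x n)) = y" using step G by metis
    finally show ?thesis by simp
  qed
  then show ?case using step sub k finite_subset by blast
qed

lemma span_subset_basis_span: "span (x ` S) \<subseteq> basis_span"
  unfolding basis_span_def by (intro span_mono) auto

lemma subspace_basis_span: "subspace basis_span"
  by (simp add: basis_span_def)

lemma finite_supp: "f \<in> basis_span \<Longrightarrow> finite (supp f)"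
  using span_expansion[of f UNIV] by (simp add: basis_span_def)

lemma basis_span_expansion:
  assumes "f \<in> basis_span" and "finite F" and "supp f \<subseteq> F"
  shows "f = (\<Sum>n\<in>F. sc (xs n f) (x n))"
  using span_expansion[of f UNIV] assms by (simp add: basis_span_def)

lemma supp_subset_if_in_span: "f \<in> span (x ` S) \<Longrightarrow> supp f \<subseteq> S"
  using span_expansion by blast

lemma shift_eq_sum:
  assumes "finite F" and "supp f \<subseteq> F"
  shows "shift \<rho> f = (\<Sum>n\<in>F. sc (xs n f) (x (\<rho> n)))"
  unfolding shift_def using assms by (intro sum.mono_neutral_left) (auto simp: supp_def)

lemma shift_cong: "(\<And>n. n \<in> supp f \<Longrightarrow> \<rho> n = \<sigma> n) \<Longrightarrow> shift \<rho> f = shift \<sigma> f"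
  unfolding shift_def by (intro sum.cong) auto

lemma shift_add:
  assumes "f \<in> basis_span" and "g \<in> basis_span"
  shows "shift \<rho> (f + g) = shift \<rho> f + shift \<rho> g"
proof -
  let ?F = "supp f \<union> supp g"
  have F: "finite ?F" using assms finite_supp by auto
  then have "shift \<rho> (f + g) = (\<Sum>n\<in>?F. sc (xs n (f + g)) (x (\<rho> n)))"
    using supp_add by (intro shift_eq_sum) auto
  also have "\<dots> = (\<Sum>n\<in>?F. sc (xs n f) (x (\<rho> n))) + (\<Sum>n\<in>?F. sc (xs n g) (x (\<rho> n)))"
    by (simp add: coord_add scale_left_distrib sum.distrib)
  also have "\<dots> = shift \<rho> f + shift \<rho> g"
    using shift_eq_sum[OF F, of f \<rho>] shift_eq_sum[OF F, of g \<rho>] by auto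
  finally show ?thesis .
qed

lemma shift_scale:
  assumes "f \<in> basis_span"
  shows "shift \<rho> (sc c f) = sc c (shift \<rho> f)"
proof -
  have "shift \<rho> (sc c f) = (\<Sum>n\<in>supp f. sc (xs n (sc c f)) (x (\<rho> n)))"
    using assms finite_supp supp_scale by (intro shift_eq_sum) auto
  also have "\<dots> = sc c (shift \<rho> f)"
    by (simp add: shift_def coord_scale scale_sum_right)
  finally show ?thesis .
qed

lemma shift_in_span: "shift \<rho> f \<in> span (x ` \<rho> ` supp f)"
  unfolding shift_def by (intro span_sum span_scale span_base) auto

lemma shift_in_basis_span: "shift \<rho> f \<in> basis_span"
  using shift_in_span span_subset_basis_span by blast

lemma coord_shift:
  assumes "f \<in> basis_span" and inj: "inj_on \<rho> (supp f)" and "n \<in> supp f"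
  shows "xs (\<rho> n) (shift \<rho> f) = xs n f"
proof -
  have "xs (\<rho> n) (shift \<rho> f) = (\<Sum>m\<in>supp f. if m = n then xs m f else 0)"
    unfolding shift_def using inj assms(3)
    by (auto simp: coord_sum coord_scale coord_basis inj_on_eq_iff intro!: sum.cong)
  also have "\<dots> = xs n f" using assms finite_supp by simp
  finally show ?thesis .
qed

lemma supp_shift:
  assumes "f \<in> basis_span" and "inj_on \<rho> (supp f)"
  shows "supp (shift \<rho> f) = \<rho> ` supp f"
proof
  show "supp (shift \<rho> f) \<subseteq> \<rho> ` supp f"
    using supp_subset_if_in_span[OF shift_in_span] .
  show "\<rho> ` supp f \<subseteq> supp (shift \<rho> f)"
    using coord_shift[OF assms] by (auto simp: supp_def)
qed

lemma shift_shift: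
  assumes "f \<in> basis_span" and "inj_on \<rho> (supp f)"
  shows "shift \<sigma> (shift \<rho> f) = shift (\<sigma> \<circ> \<rho>) f"
proof -
  have "shift \<sigma> (shift \<rho> f) = (\<Sum>m\<in>\<rho> ` supp f. sc (xs m (shift \<rho> f)) (x (\<sigma> m)))"
    unfolding shift_def[of \<sigma>] supp_shift[OF assms] ..
  also have "\<dots> = (\<Sum>n\<in>supp f. sc (xs (\<rho> n) (shift \<rho> f)) (x (\<sigma> (\<rho> n))))"
    using assms(2) by (simp add: sum.reindex)
  also have "\<dots> = shift (\<sigma> \<circ> \<rho>) f"
    unfolding shift_def[of "\<sigma> \<circ> \<rho>"] using assms by (intro sum.cong) (auto simp: coord_shift)
  finally show ?thesis .
qed

lemma shift_id: "f \<in> basis_span \<Longrightarrow> shift id f = f"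
  using basis_span_expansion[of f "supp f"] finite_supp by (simp add: shift_def)

lemma shift_basis: "shift \<rho> (x k) = x (\<rho> k)"
  by (simp add: shift_def supp_basis coord_basis)

lemma shift_inv_into:
  assumes "f \<in> basis_span" and "inj_on \<rho> (supp f)"
  shows "shift (inv_into (supp f) \<rho>) (shift \<rho> f) = f"
proof -
  have "shift (inv_into (supp f) \<rho>) (shift \<rho> f) = shift id f"
    unfolding shift_shift[OF assms] using assms(2) by (intro shift_cong) simp
  then show ?thesis using shift_id[OF assms(1)] by simp
qed

lemma shift_image_span_subset: "shift \<rho> ` span (x ` S) \<subseteq> span (x ` \<rho> ` S)"
proof
  fix b assume "b \<in> shift \<rho> ` span (x ` S)"
  then obtain a where "a \<in> span (x ` S)" "b = shift \<rho> a" by blast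
  then have "x ` \<rho> ` supp a \<subseteq> x ` \<rho> ` S" "b \<in> span (x ` \<rho> ` supp a)"
    using supp_subset_if_in_span shift_in_span by blast+
  then show "b \<in> span (x ` \<rho> ` S)" using span_mono by blast
qed

lemma span_image_subset_shift_image:
  assumes "inj_on \<rho> S"
  shows "span (x ` \<rho> ` S) \<subseteq> shift \<rho> ` span (x ` S)"
proof
  fix b assume b: "b \<in> span (x ` \<rho> ` S)"
  define \<rho>' where "\<rho>' = inv_into S \<rho>"
  have bV: "b \<in> basis_span" and sb: "supp b \<subseteq> \<rho> ` S"
    using b span_subset_basis_span supp_subset_if_in_span by blast+
  then have "x ` \<rho>' ` supp b \<subseteq> x ` S" by (auto simp: \<rho>'_def inv_into_into)
  then have in_span: "shift \<rho>' b \<in> span (x ` S)"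
    using shift_in_span[of \<rho>' b] span_mono by blast
  have "inj_on \<rho>' (supp b)"
    using inj_on_inv_into[OF sb] by (simp add: \<rho>'_def)
  then have "shift \<rho> (shift \<rho>' b) = shift (\<rho> \<circ> \<rho>') b" by (rule shift_shift[OF bV])
  also have "\<dots> = shift id b"
    using sb by (intro shift_cong) (auto simp: \<rho>'_def f_inv_into_f)
  also have "\<dots> = b" by (rule shift_id[OF bV])
  finally show "b \<in> shift \<rho> ` span (x ` S)" using in_span by (metis image_eqI)
qed

lemma shift_image_span: "inj_on \<rho> S \<Longrightarrow> shift \<rho> ` span (x ` S) = span (x ` \<rho> ` S)"
  using shift_image_span_subset span_image_subset_shift_image by (rule subset_antisym)

end

section \<open>Uniform bounds for shifts\<close>

locale spreading_system = biorthogonal_system sc x xs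
  for sc :: "'k::real_normed_field \<Rightarrow> 'a::ab_group_add \<Rightarrow> 'a" and x xs +
  fixes Np :: "'a \<Rightarrow> real"
  assumes Np_nonneg: "0 \<le> Np f"
    and spread: "strict_mono \<psi> \<Longrightarrow> \<exists>C c. 0 < c \<and>
      (\<forall>f\<in>basis_span. c * Np f \<le> Np (shift \<psi> f) \<and> Np (shift \<psi> f) \<le> C * Np f)"
begin

definition shift_bounded :: "real \<Rightarrow> (nat \<Rightarrow> nat) \<Rightarrow> 'a \<Rightarrow> bool" where
  "shift_bounded K \<psi> f \<longleftrightarrow> Np f \<le> K * Np (shift \<psi> f) \<and> Np (shift \<psi> f) \<le> K * Np f"

lemma shift_bounded_mono: "shift_bounded K \<psi> f \<Longrightarrow> K \<le> K' \<Longrightarrow> shift_bounded K' \<psi> f"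
  unfolding shift_bounded_def using Np_nonneg by (meson mult_right_mono order_trans)

lemma shift_bounded_strict_mono:
  assumes "strict_mono \<psi>"
  obtains K where "1 \<le> K" and "\<And>f. f \<in> basis_span \<Longrightarrow> shift_bounded K \<psi> f"
proof -
  obtain C c where c: "0 < c"
    and bounds: "\<And>f. f \<in> basis_span \<Longrightarrow> c * Np f \<le> Np (shift \<psi> f) \<and> Np (shift \<psi> f) \<le> C * Np f"
    using spread[OF assms] by blast
  define K where "K = max 1 (max C (1 / c))"
  have "shift_bounded K \<psi> f" if "f \<in> basis_span" for f
    unfolding shift_bounded_def
  proof
    have "Np f \<le> 1 / c * Np (shift \<psi> f)" using bounds[OF that] c by (simp add: field_simps)
    also have "\<dots> \<le> K * Np (shift \<psi> f)" by (intro mult_right_mono) (auto simp: K_def Np_nonneg)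
    finally show "Np f \<le> K * Np (shift \<psi> f)" .
    have "C * Np f \<le> K * Np f" by (intro mult_right_mono) (auto simp: K_def Np_nonneg)
    then show "Np (shift \<psi> f) \<le> K * Np f" using bounds[OF that] by linarith
  qed
  then show thesis using that[of K] by (simp add: K_def)
qed

text \<open>A bound for all maps with a fixed prefix \<psi>0 on [0, k) gives a bound for every \<phi>:
  with \<psi> the splice of \<psi>0 and \<phi>, we have \<psi> \<circ> (+ k) = (+ \<psi>0 k) \<circ> \<phi>.\<close>

lemma uniform_shift_bound_if_prefix_bound:
  assumes \<psi>0: "strict_mono \<psi>0" and K: "0 \<le> K"
    and prefix: "\<And>\<psi> f. strict_mono \<psi> \<Longrightarrow> (\<forall>i<k. \<psi> i = \<psi>0 i) \<Longrightarrow> f \<in> basis_span \<Longrightarrow> shift_bounded K \<psi> f"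
  shows "\<exists>K'. \<forall>\<phi>. strict_mono \<phi> \<longrightarrow> (\<forall>f\<in>basis_span. shift_bounded K' \<phi> f)"
proof -
  define \<sigma> where "\<sigma> = (\<lambda>n::nat. n + k)"
  define \<tau> where "\<tau> = (\<lambda>n::nat. n + \<psi>0 k)"
  have "strict_mono \<sigma>" "strict_mono \<tau>" by (auto simp: strict_mono_def \<sigma>_def \<tau>_def)
  then obtain K\<sigma> K\<tau> where K\<sigma>: "1 \<le> K\<sigma>" "\<And>f. f \<in> basis_span \<Longrightarrow> shift_bounded K\<sigma> \<sigma> f"
    and K\<tau>: "1 \<le> K\<tau>" "\<And>f. f \<in> basis_span \<Longrightarrow> shift_bounded K\<tau> \<tau> f"
    using shift_bounded_strict_mono by metis
  have "shift_bounded (K\<sigma> * K * K\<tau>) \<phi> f" if \<phi>: "strict_mono \<phi>" and f: "f \<in> basis_span" for \<phi> f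
  proof -
    define \<psi> where "\<psi> = (\<lambda>n. if n < k then \<psi>0 n else \<psi>0 k + \<phi> (n - k))"
    have "strict_mono \<psi>" unfolding \<psi>_def using \<psi>0 \<phi> by (rule strict_mono_splice)
    then have bounded: "shift_bounded K \<psi> (shift \<sigma> f)"
      using prefix shift_in_basis_span by (simp add: \<psi>_def)
    have "shift \<psi> (shift \<sigma> f) = shift (\<psi> \<circ> \<sigma>) f"
      using shift_shift[OF f] strict_mono_imp_inj_on[OF \<open>strict_mono \<sigma>\<close>] by (simp add: inj_on_subset)
    also have "\<psi> \<circ> \<sigma> = \<tau> \<circ> \<phi>" by (auto simp: \<psi>_def \<sigma>_def \<tau>_def)
    also have "shift (\<tau> \<circ> \<phi>) f = shift \<tau> (shift \<phi> f)"
      using shift_shift[OF f] strict_mono_imp_inj_on[OF \<phi>] by (simp add: inj_on_subset)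
    finally have key: "shift \<psi> (shift \<sigma> f) = shift \<tau> (shift \<phi> f)" .
    let ?a = "Np f" and ?b = "Np (shift \<phi> f)" and ?g = "Np (shift \<sigma> f)" and ?h = "Np (shift \<tau> (shift \<phi> f))"
    have ag: "?a \<le> K\<sigma> * ?g" "?g \<le> K\<sigma> * ?a" using K\<sigma>(2)[OF f] by (simp_all add: shift_bounded_def)
    have gh: "?g \<le> K * ?h" "?h \<le> K * ?g" using bounded key by (simp_all add: shift_bounded_def)
    have hb: "?h \<le> K\<tau> * ?b" "?b \<le> K\<tau> * ?h"
      using K\<tau>(2)[OF shift_in_basis_span] by (simp_all add: shift_bounded_def)
    have "?a \<le> K\<sigma> * (K * (K\<tau> * ?b))"
      using ag(1) gh(1) hb(1) K K\<sigma>(1) by (meson order_trans mult_left_mono zero_le_one)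
    moreover have "?b \<le> K\<tau> * (K * (K\<sigma> * ?a))"
      using hb(2) gh(2) ag(2) K K\<tau>(1) by (meson order_trans mult_left_mono zero_le_one)
    ultimately show ?thesis by (simp add: shift_bounded_def mult_ac)
  qed
  then show ?thesis by blast
qed

text \<open>Prefixes extended recursively by maps with ever worse shift bounds would have a diagonal
  limit whose shift is unbounded.\<close>

lemma no_unbounded_prefix_extensions:
  fixes \<Psi> :: "nat \<Rightarrow> (nat \<Rightarrow> nat) \<Rightarrow> nat \<Rightarrow> nat \<Rightarrow> nat" and F :: "nat \<Rightarrow> (nat \<Rightarrow> nat) \<Rightarrow> nat \<Rightarrow> 'a"
  assumes bad: "\<And>k \<psi>0 j. strict_mono \<psi>0 \<Longrightarrow> strict_mono (\<Psi> k \<psi>0 j) \<and> (\<forall>i<k. \<Psi> k \<psi>0 j i = \<psi>0 i) \<and>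
    F k \<psi>0 j \<in> basis_span \<and> \<not> shift_bounded (Suc j) (\<Psi> k \<psi>0 j) (F k \<psi>0 j)"
  shows False
proof -
  define st :: "nat \<Rightarrow> nat \<times> (nat \<Rightarrow> nat)" where
    "st = rec_nat (0, id) (\<lambda>j s. (Suc (fst s + Max (insert 0 (supp (F (fst s) (snd s) j)))),
      \<Psi> (fst s) (snd s) j))"
  define k where "k j = fst (st j)" for j
  define \<phi> where "\<phi> j = snd (st j)" for j
  have k_Suc: "k (Suc j) = Suc (k j + Max (insert 0 (supp (F (k j) (\<phi> j) j))))"
    and \<phi>_Suc: "\<phi> (Suc j) = \<Psi> (k j) (\<phi> j) j" for j
    by (simp_all add: k_def \<phi>_def st_def)
  have sm: "strict_mono (\<phi> j)" for j
  proof (induction j)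
    case 0
    show ?case by (simp add: \<phi>_def st_def strict_mono_def)
  next
    case (Suc j)
    then show ?case using bad[OF Suc.IH] by (simp add: \<phi>_Suc)
  qed
  have k_less: "k j < k (Suc j)" for j by (simp add: k_Suc)
  have agree: "\<phi> (Suc j) i = \<phi> j i" if "i < k j" for i j using bad[OF sm] that by (simp add: \<phi>_Suc)
  obtain \<psi> where "strict_mono \<psi>" and \<psi>: "\<And>j i. i < k j \<Longrightarrow> \<psi> i = \<phi> j i"
    using strict_mono_diagonal_limit[of \<phi> k, OF sm k_less agree] by blast
  then obtain K where K: "\<And>f. f \<in> basis_span \<Longrightarrow> shift_bounded K \<psi> f"
    using shift_bounded_strict_mono[OF \<open>strict_mono \<psi>\<close>] by blast
  obtain j :: nat where "K \<le> j" using real_arch_simple by blast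
  then have "K \<le> Suc j" by simp
  define f where "f = F (k j) (\<phi> j) j"
  have f: "f \<in> basis_span" and unbounded: "\<not> shift_bounded (Suc j) (\<phi> (Suc j)) f"
    using bad[OF sm[of j]] by (simp_all add: f_def \<phi>_Suc)
  have "n < k (Suc j)" if "n \<in> supp f" for n
    using that finite_supp[OF f] by (simp add: k_Suc f_def less_Suc_eq_le trans_le_add2)
  then have "shift \<psi> f = shift (\<phi> (Suc j)) f" by (intro shift_cong \<psi>)
  then show False
    using unbounded shift_bounded_mono[OF K[OF f] \<open>K \<le> Suc j\<close>] by (simp add: shift_bounded_def)
qed

lemma shift_bounded_prefix_extensions:
  "\<exists>k \<psi>0 j. strict_mono \<psi>0 \<and>
     (\<forall>\<psi> f. strict_mono \<psi> \<longrightarrow> (\<forall>i<k. \<psi> i = \<psi>0 i) \<longrightarrow> f \<in> basis_span \<longrightarrow> shift_bounded (Suc j) \<psi> f)"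
proof (rule ccontr)
  assume none: "\<not> ?thesis"
  define bad where "bad k \<psi>0 j \<psi> f \<longleftrightarrow>
    strict_mono \<psi> \<and> (\<forall>i<k. \<psi> i = \<psi>0 i) \<and> f \<in> basis_span \<and> \<not> shift_bounded (Suc j) \<psi> f"
    for k \<psi>0 j \<psi> f
  have exists_bad: "\<exists>\<psi> f. bad k \<psi>0 j \<psi> f" if "strict_mono \<psi>0" for k \<psi>0 j
    using none that by (auto simp: bad_def)
  define \<Psi> where "\<Psi> k \<psi>0 j = (SOME \<psi>. \<exists>f. bad k \<psi>0 j \<psi> f)" for k \<psi>0 j
  define F where "F k \<psi>0 j = (SOME f. bad k \<psi>0 j (\<Psi> k \<psi>0 j) f)" for k \<psi>0 j
  have "bad k \<psi>0 j (\<Psi> k \<psi>0 j) (F k \<psi>0 j)" if "strict_mono \<psi>0" for k \<psi>0 j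
  proof -
    have "\<exists>f. bad k \<psi>0 j (\<Psi> k \<psi>0 j) f"
      unfolding \<Psi>_def using exists_bad[OF that] by (rule someI_ex[of "\<lambda>\<psi>. \<exists>f. bad k \<psi>0 j \<psi> f"])
    then show ?thesis unfolding F_def by (rule someI_ex[of "bad k \<psi>0 j (\<Psi> k \<psi>0 j)"])
  qed
  then show False unfolding bad_def by (intro no_unbounded_prefix_extensions[of \<Psi> F]) blast
qed

lemma uniform_shift_bound:
  obtains K where "1 \<le> K" and "\<And>\<phi> f. strict_mono \<phi> \<Longrightarrow> f \<in> basis_span \<Longrightarrow> shift_bounded K \<phi> f"
proof -
  obtain k \<psi>0 and j :: nat where "strict_mono \<psi>0"
    and "\<forall>\<psi> f. strict_mono \<psi> \<longrightarrow> (\<forall>i<k. \<psi> i = \<psi>0 i) \<longrightarrow> f \<in> basis_span \<longrightarrow> shift_bounded (Suc j) \<psi> f"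
    using shift_bounded_prefix_extensions by blast
  then have "\<exists>K. \<forall>\<phi>. strict_mono \<phi> \<longrightarrow> (\<forall>f\<in>basis_span. shift_bounded K \<phi> f)"
    by (intro uniform_shift_bound_if_prefix_bound[of \<psi>0 "Suc j" k]) auto
  then obtain K where K: "\<forall>\<phi>. strict_mono \<phi> \<longrightarrow> (\<forall>f\<in>basis_span. shift_bounded K \<phi> f)" by blast
  show thesis
  proof (rule that[of "max 1 K"])
    show "shift_bounded (max 1 K) \<phi> f" if "strict_mono \<phi>" "f \<in> basis_span" for \<phi> f
      using K that shift_bounded_mono[of K \<phi> f "max 1 K"] by simp
  qed simp
qed

lemma uniform_shift_on_bound:
  "\<exists>K\<ge>1. \<forall>\<rho> f. f \<in> basis_span \<longrightarrow> strict_mono_on (supp f) \<rho> \<longrightarrow> shift_bounded K \<rho> f"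
proof -
  obtain K where K: "1 \<le> K" "\<And>\<phi> f. strict_mono \<phi> \<Longrightarrow> f \<in> basis_span \<Longrightarrow> shift_bounded K \<phi> f"
    using uniform_shift_bound by blast
  have bounded: "shift_bounded (K * K) \<rho> f"
    if f: "f \<in> basis_span" and \<rho>: "strict_mono_on (supp f) \<rho>" for f \<rho>
  proof -
    obtain \<psi> \<phi> :: "nat \<Rightarrow> nat"
      where \<psi>: "strict_mono \<psi>" and \<phi>: "strict_mono \<phi>" and \<phi>\<rho>: "\<forall>n\<in>supp f. \<phi> (\<rho> n) = \<psi> n"
      by (rule strict_mono_on_factor[OF finite_supp[OF f] \<rho>])
    have "shift \<phi> (shift \<rho> f) = shift (\<phi> \<circ> \<rho>) f"
      by (rule shift_shift[OF f strict_mono_on_imp_inj_on[OF \<rho>]])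
    also have "\<dots> = shift \<psi> f" using \<phi>\<rho> by (intro shift_cong) simp
    finally have key: "shift \<phi> (shift \<rho> f) = shift \<psi> f" .
    let ?a = "Np f" and ?r = "Np (shift \<rho> f)" and ?s = "Np (shift \<psi> f)"
    have rs: "?r \<le> K * ?s" "?s \<le> K * ?r"
      using K(2)[OF \<phi> shift_in_basis_span[of \<rho> f]] key by (simp_all add: shift_bounded_def)
    have sa: "?s \<le> K * ?a" "?a \<le> K * ?s"
      using K(2)[OF \<psi> f] by (simp_all add: shift_bounded_def)
    have K0: "0 \<le> K" using K(1) by simp
    have "?r \<le> K * (K * ?a)" by (rule order_trans[OF rs(1) mult_left_mono[OF sa(1) K0]])
    moreover have "?a \<le> K * (K * ?r)" by (rule order_trans[OF sa(2) mult_left_mono[OF rs(2) K0]])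
    ultimately show ?thesis by (simp add: shift_bounded_def mult.assoc)
  qed
  have "1 \<le> K * K" using mult_mono[OF K(1) K(1)] K(1) by simp
  with bounded show ?thesis by blast
qed

end

section \<open>The spread norm\<close>

locale p_spreading_system = spreading_system sc x xs Np + p_normed_space sc p Np
  for sc :: "'k::real_normed_field \<Rightarrow> 'a::ab_group_add \<Rightarrow> 'a" and x xs Np p
begin

definition shift_const :: real where
  "shift_const = (SOME K. 1 \<le> K \<and>
     (\<forall>\<rho> f. f \<in> basis_span \<longrightarrow> strict_mono_on (supp f) \<rho> \<longrightarrow> shift_bounded K \<rho> f))"

lemma shift_const_spec:
  "1 \<le> shift_const \<and>
     (\<forall>\<rho> f. f \<in> basis_span \<longrightarrow> strict_mono_on (supp f) \<rho> \<longrightarrow> shift_bounded shift_const \<rho> f)"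
  unfolding shift_const_def using uniform_shift_on_bound by (rule someI_ex)

lemma shift_const_ge_1: "1 \<le> shift_const"
  using shift_const_spec by blast

lemma shift_le_shift_const:
  assumes "f \<in> basis_span" and "strict_mono_on (supp f) \<rho>"
  shows "Np (shift \<rho> f) \<le> shift_const * Np f" and "Np f \<le> shift_const * Np (shift \<rho> f)"
  using shift_const_spec assms unfolding shift_bounded_def by blast+

definition spread_maps :: "nat \<Rightarrow> 'a \<Rightarrow> (nat \<Rightarrow> nat) set" where
  "spread_maps t f = {\<rho>. \<forall>n\<in>supp f. Suc t \<le> \<rho> n \<and> (\<forall>m\<in>supp f. n < m \<longrightarrow> \<rho> n + Suc t \<le> \<rho> m)}"

definition spread_sup :: "nat \<Rightarrow> 'a \<Rightarrow> real" where
  "spread_sup t f = (SUP \<rho>\<in>spread_maps t f. Np (shift \<rho> f))"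

definition spread_norm :: "'a \<Rightarrow> real" where
  "spread_norm f = lim (\<lambda>t. spread_sup t f)"

lemma spread_maps_witness: "(\<lambda>n. Suc t * Suc n) \<in> spread_maps t f"
proof -
  have "Suc t * Suc n + Suc t \<le> Suc t * Suc m" if "n < m" for n m
    using mult_le_mono2[of "Suc (Suc n)" "Suc m" "Suc t"] that by simp
  then show ?thesis by (auto simp: spread_maps_def)
qed

lemma strict_mono_on_spread_maps: "\<rho> \<in> spread_maps t f \<Longrightarrow> strict_mono_on (supp f) \<rho>"
  by (rule strict_mono_onI) (fastforce simp: spread_maps_def)

lemma spread_maps_antimono: "t \<le> t' \<Longrightarrow> spread_maps t' f \<subseteq> spread_maps t f"
  unfolding spread_maps_def by force

lemma bdd_above_spread_maps:
  "f \<in> basis_span \<Longrightarrow> bdd_above ((\<lambda>\<rho>. Np (shift \<rho> f)) ` spread_maps t f)"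
  by (rule bdd_aboveI2[of _ _ "shift_const * Np f"])
    (auto intro: shift_le_shift_const strict_mono_on_spread_maps)

lemma spread_sup_ge: "f \<in> basis_span \<Longrightarrow> \<rho> \<in> spread_maps t f \<Longrightarrow> Np (shift \<rho> f) \<le> spread_sup t f"
  unfolding spread_sup_def by (rule cSUP_upper) (auto intro: bdd_above_spread_maps)

lemma spread_sup_le: "f \<in> basis_span \<Longrightarrow> spread_sup t f \<le> shift_const * Np f"
  unfolding spread_sup_def using spread_maps_witness
  by (intro cSUP_least) (auto intro: shift_le_shift_const strict_mono_on_spread_maps)

lemma le_spread_sup:
  assumes "f \<in> basis_span"
  shows "Np f \<le> shift_const * spread_sup t f"
proof -
  let ?\<rho> = "\<lambda>n. Suc t * Suc n"
  have "Np f \<le> shift_const * Np (shift ?\<rho> f)"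
    using shift_le_shift_const(2)[OF assms strict_mono_on_spread_maps[OF spread_maps_witness]] .
  also have "\<dots> \<le> shift_const * spread_sup t f"
    using shift_const_ge_1 spread_sup_ge[OF assms spread_maps_witness] by (intro mult_left_mono) auto
  finally show ?thesis .
qed

lemma spread_sup_nonneg: "f \<in> basis_span \<Longrightarrow> 0 \<le> spread_sup t f"
  using spread_sup_ge[OF _ spread_maps_witness] Np_nonneg order_trans by blast

lemma spread_sup_antimono: "f \<in> basis_span \<Longrightarrow> t \<le> t' \<Longrightarrow> spread_sup t' f \<le> spread_sup t f"
  unfolding spread_sup_def using spread_maps_witness[of t' f] spread_maps_antimono[of t t' f]
  by (intro cSUP_subset_mono) (auto intro: bdd_above_spread_maps)

lemma spread_sup_tendsto:
  assumes "f \<in> basis_span"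
  shows "(\<lambda>t. spread_sup t f) \<longlonglongrightarrow> spread_norm f" and "spread_norm f \<le> spread_sup t f"
proof -
  have "decseq (\<lambda>t. spread_sup t f)" using spread_sup_antimono[OF assms] by (simp add: decseq_def)
  then obtain L where L: "(\<lambda>t. spread_sup t f) \<longlonglongrightarrow> L" "\<And>t. L \<le> spread_sup t f"
    using decseq_convergent[of "\<lambda>t. spread_sup t f" 0] spread_sup_nonneg[OF assms] by blast
  moreover have "spread_norm f = L" unfolding spread_norm_def using L(1) by (rule limI)
  ultimately show "(\<lambda>t. spread_sup t f) \<longlonglongrightarrow> spread_norm f" and "spread_norm f \<le> spread_sup t f"
    by simp_all
qed

lemma spread_norm_le: "f \<in> basis_span \<Longrightarrow> spread_norm f \<le> shift_const * Np f"
  using spread_sup_tendsto(2) spread_sup_le order_trans by blast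

lemma le_spread_norm:
  assumes "f \<in> basis_span"
  shows "Np f \<le> shift_const * spread_norm f"
proof -
  have "(\<lambda>t. shift_const * spread_sup t f) \<longlonglongrightarrow> shift_const * spread_norm f"
    using spread_sup_tendsto(1)[OF assms] by (rule tendsto_mult_left)
  then show ?thesis by (rule LIMSEQ_le_const) (use le_spread_sup[OF assms] in auto)
qed

lemma spread_sup_scale:
  assumes f: "f \<in> basis_span"
  shows "spread_sup t (sc c f) = norm c * spread_sup t f"
proof (cases "c = 0")
  case True
  then show ?thesis using M_eq_0_iff[of 0]
    by (simp add: spread_sup_def spread_maps_def supp_def coord_zero shift_def)
next
  case False
  have supp_eq: "supp (sc c f) = supp f" using False by (auto simp: supp_def coord_scale)
  have norm_eq: "Np (shift \<rho> (sc c f)) = norm c * Np (shift \<rho> f)" for \<rho>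
    using shift_scale[OF f] M_scale by simp
  have maps_eq: "spread_maps t (sc c f) = spread_maps t f" by (simp add: spread_maps_def supp_eq)
  have cf: "sc c f \<in> basis_span" using f subspace_scale[OF subspace_basis_span] by blast
  have "spread_sup t (sc c f) \<le> norm c * spread_sup t f"
    unfolding spread_sup_def[of t "sc c f"] maps_eq norm_eq using spread_maps_witness
    by (intro cSUP_least) (auto intro!: mult_left_mono spread_sup_ge[OF f])
  moreover have "spread_sup t f \<le> spread_sup t (sc c f) / norm c"
    unfolding spread_sup_def[of t f] using spread_maps_witness
  proof (intro cSUP_least)
    fix \<rho> assume "\<rho> \<in> spread_maps t f"
    then have "norm c * Np (shift \<rho> f) \<le> spread_sup t (sc c f)"
      using spread_sup_ge[OF cf] maps_eq norm_eq by metis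
    then show "Np (shift \<rho> f) \<le> spread_sup t (sc c f) / norm c"
      using False by (simp add: field_simps)
  qed auto
  then have "norm c * spread_sup t f \<le> spread_sup t (sc c f)" using False by (simp add: field_simps)
  ultimately show ?thesis by simp
qed


lemma spread_norm_scale:
  assumes f: "f \<in> basis_span"
  shows "spread_norm (sc c f) = norm c * spread_norm f"
proof -
  have cf: "sc c f \<in> basis_span" using f subspace_scale[OF subspace_basis_span] by blast
  have "(\<lambda>t. spread_sup t (sc c f)) \<longlonglongrightarrow> norm c * spread_norm f"
    unfolding spread_sup_scale[OF f] using spread_sup_tendsto(1)[OF f] by (rule tendsto_mult_left)
  with spread_sup_tendsto(1)[OF cf] show ?thesis by (rule LIMSEQ_unique)
qed

text \<open>A copy of f + h whose support has gaps larger than (t + 1) |U|, U = supp f \<union> supp h,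
  can be re-spread on all of U with gaps larger than t, giving sparse copies of f and h.\<close>

lemma spread_sup_powr_add:
  assumes f: "f \<in> basis_span" and h: "h \<in> basis_span"
  shows "spread_sup (Suc t * card (supp f \<union> supp h)) (f + h) powr p
    \<le> spread_sup t f powr p + spread_sup t h powr p"
proof -
  define U where "U = supp f \<union> supp h"
  define T where "T = Suc t * card U"
  define B where "B = spread_sup t f powr p + spread_sup t h powr p"
  have fin: "finite U" using finite_supp f h by (simp add: U_def)
  have fh: "f + h \<in> basis_span" using f h subspace_add[OF subspace_basis_span] by blast
  have "Np (shift \<rho> (f + h)) \<le> B powr (1 / p)" if \<rho>: "\<rho> \<in> spread_maps T (f + h)" for \<rho>
  proof -
    have W: "supp (f + h) \<subseteq> U" using supp_add by (simp add: U_def)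
    have "\<forall>w\<in>supp (f + h). Suc t * card U \<le> \<rho> w"
      and "\<forall>w\<in>supp (f + h). \<forall>w'\<in>supp (f + h). w < w' \<longrightarrow> \<rho> w + Suc t * card U \<le> \<rho> w'"
      using \<rho> by (fastforce simp: spread_maps_def T_def)+
    then obtain \<sigma> :: "nat \<Rightarrow> nat" where \<sigma>: "\<forall>w\<in>supp (f + h). \<sigma> w = \<rho> w" "\<forall>u\<in>U. Suc t \<le> \<sigma> u"
      "\<forall>u\<in>U. \<forall>u'\<in>U. u < u' \<longrightarrow> \<sigma> u + Suc t \<le> \<sigma> u'"
      using spread_extension[OF fin W, of "Suc t" \<rho>] by blast
    have \<sigma>f: "\<sigma> \<in> spread_maps t f" and \<sigma>h: "\<sigma> \<in> spread_maps t h"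
      using \<sigma>(2,3) by (auto simp: spread_maps_def U_def)
    have "shift \<rho> (f + h) = shift \<sigma> (f + h)" using \<sigma>(1) by (intro shift_cong) simp
    also have "\<dots> = shift \<sigma> f + shift \<sigma> h" by (rule shift_add[OF f h])
    finally have "Np (shift \<rho> (f + h)) powr p \<le> Np (shift \<sigma> f) powr p + Np (shift \<sigma> h) powr p"
      using M_powr_add by simp
    also have "\<dots> \<le> B" unfolding B_def using p_pos Np_nonneg
      by (intro add_mono powr_mono2 spread_sup_ge \<sigma>f \<sigma>h f h) auto
    finally have "(Np (shift \<rho> (f + h)) powr p) powr (1 / p) \<le> B powr (1 / p)"
      using p_pos by (intro powr_mono2) auto
    then show ?thesis using p_pos Np_nonneg by (simp add: powr_powr)
  qed
  then have "spread_sup T (f + h) \<le> B powr (1 / p)"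
    unfolding spread_sup_def using spread_maps_witness by (intro cSUP_least) auto
  then have "spread_sup T (f + h) powr p \<le> (B powr (1 / p)) powr p"
    using p_pos spread_sup_nonneg[OF fh] by (intro powr_mono2) auto
  also have "\<dots> = B" using p_pos by (simp add: B_def powr_powr)
  finally show ?thesis by (simp add: T_def U_def B_def)
qed

lemma spread_norm_powr_add:
  assumes f: "f \<in> basis_span" and h: "h \<in> basis_span"
  shows "spread_norm (f + h) powr p \<le> spread_norm f powr p + spread_norm h powr p"
proof -
  have fh: "f + h \<in> basis_span" using f h subspace_add[OF subspace_basis_span] by blast
  have "(\<lambda>t. spread_sup t f powr p + spread_sup t h powr p) \<longlonglongrightarrow> spread_norm f powr p + spread_norm h powr p"
    using spread_sup_tendsto[OF f] spread_sup_tendsto[OF h] spread_sup_nonneg[OF f] spread_sup_nonneg[OF h] p_pos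
    by (intro tendsto_intros) auto
  moreover have "spread_norm (f + h) powr p \<le> spread_sup t f powr p + spread_sup t h powr p" for t
  proof -
    have "spread_norm (f + h) \<le> spread_sup (Suc t * card (supp f \<union> supp h)) (f + h)"
      by (rule spread_sup_tendsto(2)[OF fh])
    then have "spread_norm (f + h) powr p \<le> spread_sup (Suc t * card (supp f \<union> supp h)) (f + h) powr p"
      using p_pos order_trans[OF Np_nonneg le_spread_norm[OF fh]] shift_const_ge_1
      by (intro powr_mono2) (auto simp: zero_le_mult_iff)
    also have "\<dots> \<le> spread_sup t f powr p + spread_sup t h powr p" by (rule spread_sup_powr_add[OF f h])
    finally show ?thesis .
  qed
  ultimately show ?thesis by (intro LIMSEQ_le_const) auto
qed

lemma spread_sup_shift_le:
  assumes f: "f \<in> basis_span" and \<psi>: "strict_mono_on (supp f) \<psi>"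
  shows "spread_sup t (shift \<psi> f) \<le> spread_sup t f"
  unfolding spread_sup_def[of t "shift \<psi> f"] using spread_maps_witness
proof (intro cSUP_least)
  fix \<rho> assume \<rho>: "\<rho> \<in> spread_maps t (shift \<psi> f)"
  have inj: "inj_on \<psi> (supp f)" using \<psi> by (rule strict_mono_on_imp_inj_on)
  have "\<rho> \<circ> \<psi> \<in> spread_maps t f"
    using \<rho> strict_mono_onD[OF \<psi>] unfolding spread_maps_def supp_shift[OF f inj] by auto
  then show "Np (shift \<rho> (shift \<psi> f)) \<le> spread_sup t f"
    using shift_shift[OF f inj] spread_sup_ge[OF f] by simp
qed auto

lemma spread_norm_shift:
  assumes f: "f \<in> basis_span" and \<psi>: "strict_mono_on (supp f) \<psi>"
  shows "spread_norm (shift \<psi> f) = spread_norm f"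
proof -
  have le: "spread_norm (shift \<rho> g) \<le> spread_norm g"
    if "g \<in> basis_span" "strict_mono_on (supp g) \<rho>" for g \<rho>
    using spread_sup_tendsto(1)[OF that(1)] spread_sup_tendsto(1)[OF shift_in_basis_span]
      spread_sup_shift_le[OF that]
    by (intro LIMSEQ_le[of "\<lambda>t. spread_sup t (shift \<rho> g)" _ "\<lambda>t. spread_sup t g"]) auto
  have inj: "inj_on \<psi> (supp f)" using \<psi> by (rule strict_mono_on_imp_inj_on)
  have "strict_mono_on (supp (shift \<psi> f)) (inv_into (supp f) \<psi>)"
    using strict_mono_on_inv_into[OF \<psi>] supp_shift[OF f inj] by simp
  from le[OF shift_in_basis_span this] have "spread_norm f \<le> spread_norm (shift \<psi> f)"
    by (simp add: shift_inv_into[OF f inj])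
  with le[OF f \<psi>] show ?thesis by simp
qed

sublocale p_norm_extension sc p Np basis_span spread_norm shift_const
  by unfold_locales
    (simp_all add: subspace_basis_span spread_norm_scale spread_norm_powr_add spread_norm_le
      le_spread_norm shift_const_ge_1)

lemma ext_norm_shift:
  assumes "strict_mono_on S \<psi>" and "a \<in> span (x ` S)"
  shows "ext_norm (shift \<psi> a) = ext_norm a"
proof -
  have a: "a \<in> basis_span" using assms(2) span_subset_basis_span by blast
  have "strict_mono_on (supp a) \<psi>"
    using assms(1) supp_subset_if_in_span[OF assms(2)] by (rule monotone_on_subset)
  then show ?thesis using a by (simp add: ext_norm_eq shift_in_basis_span spread_norm_shift)
qed

lemma isometrically_spreading_ext_norm:
  assumes complete: "qcomplete ext_norm"
  shows "isometrically_spreading sc ext_norm x"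
  unfolding isometrically_spreading_def
proof (intro allI impI, elim conjE)
  fix Ns and \<psi> :: "nat \<Rightarrow> nat" assume \<psi>: "strict_mono_on Ns \<psi>"
  interpret E: p_normed_space sc p ext_norm
    by unfold_locales (rule p_pos, rule p_norm_ext_norm)
  let ?A = "span (x ` Ns)"
  have add: "shift \<psi> (a + b) = shift \<psi> a + shift \<psi> b" if "a \<in> ?A" "b \<in> ?A" for a b
    using that span_subset_basis_span by (blast intro: shift_add)
  have scale: "shift \<psi> (sc c a) = sc c (shift \<psi> a)" if "a \<in> ?A" for c a
    using that span_subset_basis_span by (blast intro: shift_scale)
  have norm: "ext_norm (shift \<psi> a) = ext_norm a" if "a \<in> ?A" for a
    using ext_norm_shift[OF \<psi> that] .
  note ext = E.sub_isomorphism_closure_ext[OF complete subspace_span[of "x ` Ns"] add scale norm]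
    E.closure_ext_eq[OF complete subspace_span[of "x ` Ns"] add scale norm]
    E.M_closure_ext[OF complete subspace_span[of "x ` Ns"] add scale norm]
  define T where "T = E.closure_ext ?A (shift \<psi>)"
  have inj: "inj_on \<psi> Ns" using \<psi> by (rule strict_mono_on_imp_inj_on)
  have "\<forall>n\<in>Ns. T (x n) = x (\<psi> n)"
    using ext(2) by (simp add: T_def span_base shift_basis)
  moreover have "sub_isomorphism sc ext_norm (cspan sc ext_norm x Ns) (cspan sc ext_norm x (\<psi> ` Ns)) T"
    using ext(1) by (simp add: T_def cspan_def shift_image_span[OF inj])
  moreover have "\<forall>f\<in>cspan sc ext_norm x Ns. ext_norm (T f) \<le> ext_norm f"
    using ext(3) by (simp add: T_def cspan_def)
  ultimately show "\<exists>T. translation_op sc ext_norm x Ns \<psi> T \<and> (\<forall>f\<in>cspan sc ext_norm x Ns. ext_norm (T f) \<le> ext_norm f)"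
    using inj unfolding translation_op_def by blast
qed

end

lemma (in biorthogonal_system) shift_op_eq_shift:
  "is_shift_op sc N x xs UNIV \<psi> L \<Longrightarrow> f \<in> basis_span \<Longrightarrow> L f = shift \<psi> f"
  by (simp add: is_shift_op_def basis_span_def shift_def supp_def)

lemma p_spreading_system_if_spreading_basis:
  assumes vs: "vector_space sc" and p: "0 < p" and spreading: "spreading_basis sc N x"
    and Np: "p_norm sc p Np" and equiv: "equiv_qnorm N Np"
  shows "\<exists>xs. p_spreading_system sc x xs Np p"
proof -
  obtain xs where coord: "coord_functionals sc N x xs"
    and shifts: "\<And>\<psi>. strict_mono \<psi> \<Longrightarrow> \<exists>L. is_shift_op sc N x xs UNIV \<psi> L \<and> (\<exists>c>0. \<forall>f. c * N f \<le> N (L f))"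
    using spreading unfolding spreading_basis_def by blast
  interpret vector_space sc by (rule vs)
  interpret biorthogonal_system sc x xs
    using coord by unfold_locales (auto simp: coord_functionals_def dual_elem_def)
  have Np_nonneg: "0 \<le> Np f" for f using Np unfolding p_norm_def by blast
  have spread: "\<exists>C c. 0 < c \<and> (\<forall>f\<in>basis_span. c * Np f \<le> Np (shift \<psi> f) \<and> Np (shift \<psi> f) \<le> C * Np f)"
    if \<psi>: "strict_mono \<psi>" for \<psi>
  proof -
    obtain L c where L: "is_shift_op sc N x xs UNIV \<psi> L" and c: "0 < c" "\<And>f. c * N f \<le> N (L f)"
      using shifts[OF \<psi>] by blast
    obtain C where "\<And>f. N (L f) \<le> C * N f" using L unfolding is_shift_op_def bounded_op_def by blast
    then obtain c' C' where "0 < c'" and bounds: "\<forall>f. c' * Np f \<le> Np (L f) \<and> Np (L f) \<le> C' * Np f"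
      using equiv_qnorm_transfer_bounds[OF equiv Np_nonneg _ c(2) c(1)] by blast
    moreover have "\<forall>f\<in>basis_span. c' * Np f \<le> Np (shift \<psi> f) \<and> Np (shift \<psi> f) \<le> C' * Np f"
      using bounds by (simp add: shift_op_eq_shift[OF L, symmetric])
    ultimately show ?thesis by blast
  qed
  have "p_spreading_system sc x xs Np p"
    using vs p Np Np_nonneg spread by unfold_locales
  then show ?thesis by blast
qed

theorem theorem2p8:
  fixes sc :: "'k::real_normed_field \<Rightarrow> 'a::ab_group_add \<Rightarrow> 'a"
    and N :: "'a \<Rightarrow> real" and p :: real and x :: "nat \<Rightarrow> 'a"
  assumes "0 < p" and "p \<le> 1"
    and "quasi_banach sc N"
    and "locally_p_convex sc p N"
    and "spreading_basis sc N x"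
  shows "\<exists>N'. p_norm sc p N' \<and> equiv_qnorm N N' \<and> isometrically_spreading sc N' x"
proof -
  have vs: "vector_space sc" and complete: "qcomplete N"
    using assms(3) unfolding quasi_banach_def by auto
  obtain Np where Np: "p_norm sc p Np" and equiv: "equiv_qnorm N Np"
    using assms(4) unfolding locally_p_convex_def by blast
  obtain xs where "p_spreading_system sc x xs Np p"
    using p_spreading_system_if_spreading_basis[OF vs assms(1,5) Np equiv] by blast
  then interpret p_spreading_system sc x xs Np p .
  have equiv_ext: "equiv_qnorm N ext_norm"
    using equiv equiv_qnorm_ext_norm by (rule equiv_qnorm_trans)
  show ?thesis
  proof (intro exI conjI)
    show "p_norm sc p ext_norm" by (rule p_norm_ext_norm)
    show "equiv_qnorm N ext_norm" by (rule equiv_ext)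
    show "isometrically_spreading sc ext_norm x"
      using qcomplete_equiv_qnorm[OF complete equiv_ext] by (rule isometrically_spreading_ext_norm)
  qed
qed

end
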